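(* Let ${\cal G}$ be a closed graph (as in the context) and let $1\le\nu\le\infty$. Then $$\widetilde I'_\nu({\cal G})=\widetilde S_\nu({\cal G})\qquad\text{and}\qquad \widetilde I_\nu({\cal G})=\widetilde S_{',\nu}({\cal G}),$$ and moreover $\widetilde I_\nu({\cal G})\le \widetilde I'_\nu({\cal G})\le 2^{1/\nu}\widetilde I_\nu({\cal G})$.
   Context: A graph ${\cal G}$ consists of an undirected graph $(V,E)$ (multiple edges and self-loops allowed), a length $\ell_e>0$ per edge, a set $\partial{\cal G}\subseteq V$ of boundary vertices, a vertex measure ${\cal V}$ (supported on $V$, ${\cal V}(v)>0$) and an edge measure ${\cal E}$ (zero on vertices, equal to $a_e>0$ times Lebesgue measure on the interior of edge $e$); ${\cal G}$ is identified with its geometric realization (a closed interval of length $\ell_e$ joining the endpoints of each edge $e$). A closed graph is one with finitely many vertices and edges and $\partial{\cal G}=\emptyset$. $C^1_{\rm Dir}({\cal G})$ is the set of continuous functions on ${\cal G}$ that are uniformly continuously differentiable on each open edge interval, have support in finitely many vertices and edges, and vanish on $\partial{\cal G}$. $\|f\|_q=(\int|f|^q\,d{\cal V})^{1/q}$ and $\|\nabla f\|_1=\int|\nabla f|\,d{\cal E}$ ($\nabla f$ is the derivative along edge interiors); $\nu'$ is the dual exponent, $1/\nu+1/\nu'=1$. For an open $\Omega\subseteq{\cal G}$ with finite topological boundary $\partial\Omega$, its area is ${\cal A}(\partial\Omega)=\sum_{x\in\partial\Omega\setminus V}a_{e(x)}+\sum_{v\in\partial\Omega\cap V}\sum_{e:\,v\in\overline{\Omega\cap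 e^\circ}}a_e$, where $e(x)$ is the edge containing $x$ and $e^\circ$ is the open interior of $e$. $\Omega$ is admissible if it is open, $\partial\Omega$ is finite and $\Omega\cap\partial{\cal G}=\emptyset$. ${\cal V}(\Omega)$ is the ${\cal V}$-measure of $\Omega$ and $\complement\Omega$ the complement. Define $\widetilde I_\nu({\cal G})=\inf_\Omega {\cal A}(\partial\Omega)\min({\cal V}(\Omega),{\cal V}(\complement\Omega))^{(1/\nu)-1}$ and $\widetilde I'_\nu({\cal G})=\inf_\Omega{\cal A}(\partial\Omega)\bigl({\cal V}(\Omega)^{1-\nu}+{\cal V}(\complement\Omega)^{1-\nu}\bigr)^{1/\nu}$, infima over admissible $\Omega$. Define $\widetilde S_\nu({\cal G})=\inf_{f\in C^1_{\rm Dir}({\cal G})}\|\nabla f\|_1/\min_{a\in\mathbb R}\|f-a\|_{\nu'}$. A measurable $f$ is split if ${\cal V}(\{f>0\})\le{\cal V}({\cal G})/2$ and ${\cal V}(\{f<0\})\le{\cal V}({\cal G})/2$; $\widetilde S_{',\nu}({\cal G})=\inf\{\|\nabla f\|_1/\|f\|_{\nu'}: f\in C^1_{\rm Dir}({\cal G}),\ f\text{ split}\}$. *)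

theory Defs
  imports "HOL-Analysis.Analysis"
begin

text \<open>A graph: vertex set, edge set, each edge with two (possibly equal) endpoints
  (multiple edges and self-loops allowed), a length per edge, a weight a_e per edge
  (the density of the edge measure), a vertex measure and a set of boundary vertices.\<close>

record ('v, 'e) mgraph =
  verts :: "'v set"
  edges :: "'e set"
  src   :: "'e \<Rightarrow> 'v"
  tgt   :: "'e \<Rightarrow> 'v"
  len   :: "'e \<Rightarrow> real"
  wt    :: "'e \<Rightarrow> real"
  vmeas :: "'v \<Rightarrow> real"
  bdry  :: "'v set"

definition closed_graph :: "('v, 'e) mgraph \<Rightarrow> bool" where
  "closed_graph G \<longleftrightarrow> finite (verts G) \<and> finite (edges G) \<and>
     (\<forall>e\<in>edges G. src G e \<in> verts G \<and> tgt G e \<in> verts G \<and> len G e > 0 \<and> wt G e > 0) \<and>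
     (\<forall>v\<in>verts G. vmeas G v > 0) \<and> bdry G = {}"

text \<open>Points of the geometric realization: a vertex, or an interior point of an edge
  at distance t from its (chosen) source endpoint, 0 < t < len e.\<close>

datatype ('v, 'e) gpoint = VertPt 'v | EdgePt 'e real

definition gpoints :: "('v, 'e) mgraph \<Rightarrow> ('v, 'e) gpoint set" where
  "gpoints G = VertPt ` verts G \<union> {EdgePt e t | e t. e \<in> edges G \<and> 0 < t \<and> t < len G e}"

definition edge_interior :: "('v, 'e) mgraph \<Rightarrow> 'e \<Rightarrow> ('v, 'e) gpoint set" where
  "edge_interior G e = {EdgePt e t | t. 0 < t \<and> t < len G e}"

fun point_edge :: "('v, 'e) gpoint \<Rightarrow> 'e" where
  "point_edge (EdgePt d s) = d"
| "point_edge (VertPt v) = undefined"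

text \<open>Open sets of the (quotient) topology of the geometric realization.\<close>

definition gopen :: "('v, 'e) mgraph \<Rightarrow> ('v, 'e) gpoint set \<Rightarrow> bool" where
  "gopen G U \<longleftrightarrow> U \<subseteq> gpoints G \<and>
     (\<forall>e\<in>edges G. open {t. 0 < t \<and> t < len G e \<and> EdgePt e t \<in> U}) \<and>
     (\<forall>v\<in>verts G. VertPt v \<in> U \<longrightarrow> (\<exists>\<epsilon>>0. \<forall>e\<in>edges G.
        (src G e = v \<longrightarrow> (\<forall>t. 0 < t \<and> t < \<epsilon> \<and> t < len G e \<longrightarrow> EdgePt e t \<in> U)) \<and>
        (tgt G e = v \<longrightarrow> (\<forall>t. 0 < t \<and> len G e - \<epsilon> < t \<and> t < len G e \<longrightarrow> EdgePt e t \<in> U))))"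

definition gclosure :: "('v, 'e) mgraph \<Rightarrow> ('v, 'e) gpoint set \<Rightarrow> ('v, 'e) gpoint set" where
  "gclosure G S = {x \<in> gpoints G. \<forall>U. gopen G U \<and> x \<in> U \<longrightarrow> U \<inter> S \<noteq> {}}"

definition gfrontier :: "('v, 'e) mgraph \<Rightarrow> ('v, 'e) gpoint set \<Rightarrow> ('v, 'e) gpoint set" where
  "gfrontier G S = gclosure G S \<inter> gclosure G (gpoints G - S)"

definition gcontinuous :: "('v, 'e) mgraph \<Rightarrow> (('v, 'e) gpoint \<Rightarrow> real) \<Rightarrow> bool" where
  "gcontinuous G f \<longleftrightarrow> (\<forall>U::real set. open U \<longrightarrow> gopen G {x \<in> gpoints G. f x \<in> U})"

definition vmeasure :: "('v, 'e) mgraph \<Rightarrow> ('v, 'e) gpoint set \<Rightarrow> real" where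
  "vmeasure G S = (\<Sum>v\<in>{v \<in> verts G. VertPt v \<in> S}. vmeas G v)"

definition area :: "('v, 'e) mgraph \<Rightarrow> ('v, 'e) gpoint set \<Rightarrow> real" where
  "area G \<Omega> =
     (\<Sum>x\<in>gfrontier G \<Omega> - range VertPt. wt G (point_edge x)) +
     (\<Sum>v\<in>{v. VertPt v \<in> gfrontier G \<Omega>}.
        \<Sum>e\<in>{e \<in> edges G. VertPt v \<in> gclosure G (\<Omega> \<inter> edge_interior G e)}. wt G e)"

definition admissible :: "('v, 'e) mgraph \<Rightarrow> ('v, 'e) gpoint set \<Rightarrow> bool" where
  "admissible G \<Omega> \<longleftrightarrow> gopen G \<Omega> \<and> finite (gfrontier G \<Omega>) \<and> \<Omega> \<inter> VertPt ` bdry G = {}"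

definition inv_exp :: "ereal \<Rightarrow> real" where
  "inv_exp \<nu> = (if \<nu> = \<infinity> then 0 else 1 / real_of_ereal \<nu>)"

definition dual_exp :: "ereal \<Rightarrow> ereal" where
  "dual_exp \<nu> = (if \<nu> = 1 then \<infinity> else if \<nu> = \<infinity> then 1
                  else ereal (real_of_ereal \<nu> / (real_of_ereal \<nu> - 1)))"

text \<open>The L^q norm with respect to the vertex measure (q \<in> [1,\<infinity>]); for q = \<infinity> it is the
  essential supremum, i.e. the maximum over the vertices (all of positive measure).\<close>

definition vnorm :: "('v, 'e) mgraph \<Rightarrow> ereal \<Rightarrow> (('v, 'e) gpoint \<Rightarrow> real) \<Rightarrow> real" where
  "vnorm G q f = (if q = \<infinity> then Max (insert 0 ((\<lambda>v. \<bar>f (VertPt v)\<bar>) ` verts G))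
     else (\<Sum>v\<in>verts G. vmeas G v * \<bar>f (VertPt v)\<bar> powr real_of_ereal q) powr (1 / real_of_ereal q))"

definition grad_norm1 :: "('v, 'e) mgraph \<Rightarrow> (('v, 'e) gpoint \<Rightarrow> real) \<Rightarrow> real" where
  "grad_norm1 G f = (\<Sum>e\<in>edges G. wt G e *
      (LBINT t:{0<..<len G e}. \<bar>deriv (\<lambda>s. f (EdgePt e s)) t\<bar>))"

definition C1Dir :: "('v, 'e) mgraph \<Rightarrow> (('v, 'e) gpoint \<Rightarrow> real) set" where
  "C1Dir G = {f. gcontinuous G f \<and>
      (\<forall>e\<in>edges G. \<exists>g. (\<forall>t\<in>{0<..<len G e}. ((\<lambda>s. f (EdgePt e s)) has_real_derivative g t) (at t))
                         \<and> uniformly_continuous_on {0<..<len G e} g) \<and>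
      (\<exists>V0 E0. finite V0 \<and> finite E0 \<and>
         (\<forall>x\<in>gpoints G. f x \<noteq> 0 \<longrightarrow> (\<exists>v\<in>V0. x = VertPt v) \<or> (\<exists>e\<in>E0. x \<in> edge_interior G e))) \<and>
      (\<forall>v\<in>bdry G. f (VertPt v) = 0)}"

definition Itilde :: "('v, 'e) mgraph \<Rightarrow> ereal \<Rightarrow> ereal" where
  "Itilde G \<nu> = (INF \<Omega>\<in>{\<Omega>. admissible G \<Omega> \<and> 0 < vmeasure G \<Omega> \<and> 0 < vmeasure G (gpoints G - \<Omega>)}.
     ereal (area G \<Omega> * min (vmeasure G \<Omega>) (vmeasure G (gpoints G - \<Omega>)) powr (inv_exp \<nu> - 1)))"

definition Itilde' :: "('v, 'e) mgraph \<Rightarrow> ereal \<Rightarrow> ereal" where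
  "Itilde' G \<nu> = (INF \<Omega>\<in>{\<Omega>. admissible G \<Omega> \<and> 0 < vmeasure G \<Omega> \<and> 0 < vmeasure G (gpoints G - \<Omega>)}.
     ereal (area G \<Omega> *
       (if \<nu> = \<infinity> then 1 / min (vmeasure G \<Omega>) (vmeasure G (gpoints G - \<Omega>))
        else (vmeasure G \<Omega> powr (1 - real_of_ereal \<nu>)
              + vmeasure G (gpoints G - \<Omega>) powr (1 - real_of_ereal \<nu>)) powr (1 / real_of_ereal \<nu>))))"

definition Stilde :: "('v, 'e) mgraph \<Rightarrow> ereal \<Rightarrow> ereal" where
  "Stilde G \<nu> = (INF f\<in>{f \<in> C1Dir G. 0 < (INF a. vnorm G (dual_exp \<nu>) (\<lambda>x. f x - a))}.
     ereal (grad_norm1 G f / (INF a. vnorm G (dual_exp \<nu>) (\<lambda>x. f x - a))))"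

definition split_fun :: "('v, 'e) mgraph \<Rightarrow> (('v, 'e) gpoint \<Rightarrow> real) \<Rightarrow> bool" where
  "split_fun G f \<longleftrightarrow> vmeasure G {x. f x > 0} \<le> vmeasure G (gpoints G) / 2 \<and>
                     vmeasure G {x. f x < 0} \<le> vmeasure G (gpoints G) / 2"

definition Stilde_split :: "('v, 'e) mgraph \<Rightarrow> ereal \<Rightarrow> ereal" where
  "Stilde_split G \<nu> = (INF f\<in>{f \<in> C1Dir G. split_fun G f \<and> 0 < vnorm G (dual_exp \<nu>) f}.
     ereal (grad_norm1 G f / vnorm G (dual_exp \<nu>) f))"

end

theory Submission
  imports Defs
begin

definition edge_variation :: "('v, 'e) mgraph \<Rightarrow> ('v \<Rightarrow> real) \<Rightarrow> real" where
  "edge_variation G \<phi> = (\<Sum>e\<in>edges G. wt G e * \<bar>\<phi> (src G e) - \<phi> (tgt G e)\<bar>)"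

lemma edge_variation_nonneg:
  assumes "\<And>e. e \<in> edges G \<Longrightarrow> 0 \<le> wt G e"
  shows "0 \<le> edge_variation G \<phi>"
  unfolding edge_variation_def using assms by (intro sum_nonneg) auto

lemma edge_variation_cong:
  assumes "\<And>e. e \<in> edges G \<Longrightarrow> src G e \<in> verts G \<and> tgt G e \<in> verts G"
    and "\<And>v. v \<in> verts G \<Longrightarrow> \<phi> v = \<psi> v"
  shows "edge_variation G \<phi> = edge_variation G \<psi>"
  unfolding edge_variation_def using assms by (intro sum.cong) auto

lemma edge_variation_affine: "edge_variation G (\<lambda>v. c * \<phi> v + a) = \<bar>c\<bar> * edge_variation G \<phi>"
proof -
  have "\<bar>c * x + a - (c * y + a)\<bar> = \<bar>c\<bar> * \<bar>x - y\<bar>" for x y :: real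
    by (simp add: abs_mult flip: right_diff_distrib)
  then show ?thesis
    unfolding edge_variation_def by (simp add: sum_distrib_left mult.left_commute)
qed

lemma edge_variation_add_mono_comp:
  fixes g h :: "real \<Rightarrow> real"
  assumes "mono g" and "mono h"
  shows "edge_variation G (\<lambda>v. g (\<phi> v) + h (\<phi> v)) = edge_variation G (g \<circ> \<phi>) + edge_variation G (h \<circ> \<phi>)"
proof -
  have "\<bar>g x + h x - (g y + h y)\<bar> = \<bar>g x - g y\<bar> + \<bar>h x - h y\<bar>" for x y :: real
  proof (cases "x \<le> y")
    case True
    then show ?thesis using monoD[OF assms(1) True] monoD[OF assms(2) True] by linarith
  next
    case False
    then have yx: "y \<le> x" by simp
    show ?thesis using monoD[OF assms(1) yx] monoD[OF assms(2) yx] by linarith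
  qed
  then show ?thesis
    unfolding edge_variation_def by (simp add: distrib_left sum.distrib)
qed

lemma mono_scaled_indicator_Ioi:
  fixes d :: real
  assumes "0 \<le> d"
  shows "mono (\<lambda>x::real. d * indicator {y<..} x + c)"
proof (rule monoI)
  fix x x' :: real
  assume "x \<le> x'"
  then have "indicator {y<..} x \<le> (indicator {y<..} x' :: real)" by (auto simp: indicator_def)
  then show "d * indicator {y<..} x + c \<le> d * indicator {y<..} x' + c"
    using assms by (simp add: mult_left_mono)
qed

lemma mono_truncations:
  "mono (\<lambda>x::real. max x b)" "mono (\<lambda>x::real. max (x - a) b)" "mono (\<lambda>x::real. min x b)"
  by (auto intro!: monoI)

lemma edge_variation_indicator:
  assumes "finite (edges G)"
  shows "edge_variation G (indicator B) = sum (wt G) {e \<in> edges G. (src G e \<in> B) \<noteq> (tgt G e \<in> B)}"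
proof -
  have "edge_variation G (indicator B) = (\<Sum>e\<in>edges G. if (src G e \<in> B) \<noteq> (tgt G e \<in> B) then wt G e else 0)"
    unfolding edge_variation_def by (intro sum.cong) (auto simp: indicator_def)
  then show ?thesis using assms by (simp add: sum.inter_filter)
qed

lemma two_lowest_levels:
  fixes \<phi> :: "'v \<Rightarrow> real"
  assumes "finite V" and "\<not> card (\<phi> ` V) \<le> 1"
  obtains y0 y1 where "y0 < y1" and "{v \<in> V. y0 < \<phi> v} \<noteq> {}" and "{v \<in> V. y0 < \<phi> v} \<subset> V"
    and "\<And>v. v \<in> V \<Longrightarrow> \<phi> v = y0 \<or> y1 \<le> \<phi> v"
    and "card ((\<lambda>v. max (\<phi> v) y1) ` V) < card (\<phi> ` V)"
proof -
  have fin: "finite (\<phi> ` V)" using assms(1) by simp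
  define y0 where "y0 = Min (\<phi> ` V)"
  define B where "B = {v \<in> V. y0 < \<phi> v}"
  have "V \<noteq> {}" using assms(2) by auto
  then have y0: "y0 \<in> \<phi> ` V" "\<And>v. v \<in> V \<Longrightarrow> y0 \<le> \<phi> v"
    unfolding y0_def using fin by auto
  have "B \<noteq> {}"
  proof
    assume "B = {}"
    then have "\<phi> ` V \<subseteq> {y0}" using y0(2) unfolding B_def by force
    then show False using assms(2) card_mono[of "{y0}" "\<phi> ` V"] by simp
  qed
  have B_psubset: "B \<subset> V" using y0(1) unfolding B_def by auto
  define y1 where "y1 = Min (\<phi> ` B)"
  have "finite (\<phi> ` B)" using fin B_psubset by (meson finite_subset image_mono psubset_imp_subset)
  then have y1: "y1 \<in> \<phi> ` B" "\<And>v. v \<in> B \<Longrightarrow> y1 \<le> \<phi> v"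
    unfolding y1_def using \<open>B \<noteq> {}\<close> by auto
  have "y0 < y1" using y1(1) unfolding B_def by auto
  have levels: "\<phi> v = y0 \<or> y1 \<le> \<phi> v" if "v \<in> V" for v
  proof (cases "v \<in> B")
    case False
    then show ?thesis using that y0(2)[OF that] unfolding B_def by simp
  qed (use y1(2) in blast)
  have "\<phi> ` B \<subseteq> \<phi> ` V" using B_psubset by auto
  have "max (\<phi> v) y1 \<in> \<phi> ` V - {y0}" if "v \<in> V" for v
    using levels[OF that]
  proof
    assume "\<phi> v = y0"
    then show ?thesis using y1(1) \<open>\<phi> ` B \<subseteq> \<phi> ` V\<close> \<open>y0 < y1\<close> by auto
  next
    assume "y1 \<le> \<phi> v"
    then show ?thesis using that \<open>y0 < y1\<close> by auto
  qed
  then have "(\<lambda>v. max (\<phi> v) y1) ` V \<subseteq> \<phi> ` V - {y0}" by blast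
  then have "card ((\<lambda>v. max (\<phi> v) y1) ` V) < card (\<phi> ` V)"
    using y0(1) fin by (intro psubset_card_mono) auto
  then show ?thesis
    using that[of y0 y1] \<open>y0 < y1\<close> \<open>B \<noteq> {}\<close> B_psubset levels unfolding B_def by simp
qed

lemma lowest_positive_level:
  fixes \<phi> :: "'v \<Rightarrow> real"
  assumes "finite V" and "\<And>v. v \<in> V \<Longrightarrow> 0 \<le> \<phi> v" and "{v \<in> V. 0 < \<phi> v} \<noteq> {}"
  obtains y where "0 < y" and "\<And>v. v \<in> V \<Longrightarrow> \<phi> v = 0 \<or> y \<le> \<phi> v"
    and "{v \<in> V. 0 < max (\<phi> v - y) 0} \<subset> {v \<in> V. 0 < \<phi> v}"
proof -
  define B where "B = {v \<in> V. 0 < \<phi> v}"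
  define y where "y = Min (\<phi> ` B)"
  have "finite B" using assms(1) unfolding B_def by simp
  then have y: "y \<in> \<phi> ` B" "\<And>v. v \<in> B \<Longrightarrow> y \<le> \<phi> v"
    unfolding y_def using assms(3) B_def by auto
  have "0 < y" using y(1) unfolding B_def by auto
  moreover have "\<phi> v = 0 \<or> y \<le> \<phi> v" if "v \<in> V" for v
    using that assms(2)[OF that] y(2)[of v] unfolding B_def by fastforce
  moreover have "{v \<in> V. 0 < max (\<phi> v - y) 0} \<subset> B"
    using y(1) unfolding B_def by (auto simp: max_def)
  ultimately show ?thesis using that[of y] unfolding B_def by simp
qed

locale graph_seminorm =
  fixes G :: "('v, 'e) mgraph" and N :: "('v \<Rightarrow> real) \<Rightarrow> real"
  assumes finite_verts: "finite (verts G)"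
    and edge_ends: "\<And>e. e \<in> edges G \<Longrightarrow> src G e \<in> verts G \<and> tgt G e \<in> verts G"
    and wt_nonneg: "\<And>e. e \<in> edges G \<Longrightarrow> 0 \<le> wt G e"
    and N_cong: "\<And>\<phi> \<psi>. (\<And>v. v \<in> verts G \<Longrightarrow> \<phi> v = \<psi> v) \<Longrightarrow> N \<phi> = N \<psi>"
    and N_triangle: "\<And>\<phi> \<psi>. N (\<lambda>v. \<phi> v + \<psi> v) \<le> N \<phi> + N \<psi>"
    and N_scale: "\<And>c \<phi>. N (\<lambda>v. c * \<phi> v) = \<bar>c\<bar> * N \<phi>"
begin

lemma N_eq_0: "(\<And>v. v \<in> verts G \<Longrightarrow> \<phi> v = 0) \<Longrightarrow> N \<phi> = 0"
  using N_cong[of \<phi> "\<lambda>v. 0 * \<phi> v"] N_scale[of 0 \<phi>] by simp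

lemma N_add_scaled_le: "0 \<le> d \<Longrightarrow> N (\<lambda>v. \<phi> v + d * \<psi> v) \<le> N \<phi> + d * N \<psi>"
  using N_triangle[of \<phi> "\<lambda>v. d * \<psi> v"] N_scale[of d \<psi>] by simp

lemma variation_split_layer:
  assumes "mono g" and "\<And>v. v \<in> verts G \<Longrightarrow> \<phi> v = g (\<phi> v) + (d * indicator {y<..} (\<phi> v) + c)"
    and "0 \<le> d"
  shows "edge_variation G \<phi> =
    edge_variation G (\<lambda>v. g (\<phi> v)) + d * edge_variation G (indicator {v \<in> verts G. y < \<phi> v})"
proof -
  have "edge_variation G \<phi> = edge_variation G (\<lambda>v. g (\<phi> v) + (d * indicator {y<..} (\<phi> v) + c))"
    by (rule edge_variation_cong[OF edge_ends assms(2)])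
  also have "\<dots> = edge_variation G (\<lambda>v. g (\<phi> v)) + edge_variation G (\<lambda>v. d * indicator {y<..} (\<phi> v) + c)"
    using edge_variation_add_mono_comp[OF assms(1) mono_scaled_indicator_Ioi[OF assms(3)], where G=G and \<phi>=\<phi>]
    unfolding o_def .
  also have "edge_variation G (\<lambda>v. d * indicator {y<..} (\<phi> v) + c) = d * edge_variation G (\<lambda>v. indicator {y<..} (\<phi> v))"
    using edge_variation_affine[of G d "\<lambda>v. indicator {y<..} (\<phi> v)" c] assms(3) by simp
  also have "edge_variation G (\<lambda>v. indicator {y<..} (\<phi> v)) = edge_variation G (indicator {v \<in> verts G. y < \<phi> v})"
    by (rule edge_variation_cong[OF edge_ends]) (auto simp: indicator_def)
  finally show ?thesis .
qed

theorem shifted_bound_from_cuts: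
  assumes "0 \<le> \<kappa>"
    and cuts: "\<And>B. B \<subset> verts G \<Longrightarrow> B \<noteq> {} \<Longrightarrow>
       \<exists>b. \<kappa> * N (\<lambda>v. indicator B v - b) \<le> edge_variation G (indicator B)"
  shows "\<exists>a. \<kappa> * N (\<lambda>v. \<phi> v - a) \<le> edge_variation G \<phi>"
proof (induction "card (\<phi> ` verts G)" arbitrary: \<phi> rule: less_induct)
  case less
  show ?case
  proof (cases "card (\<phi> ` verts G) \<le> 1")
    case True
    then have "card (\<phi> ` verts G) \<le> Suc 0" by simp
    then have "\<forall>x\<in>\<phi> ` verts G. \<forall>y\<in>\<phi> ` verts G. x = y"
      by (simp only: card_le_Suc0_iff_eq[OF finite_imageI[OF finite_verts]])
    then have const: "\<forall>u\<in>verts G. \<forall>v\<in>verts G. \<phi> u = \<phi> v" by (meson imageI)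
    define a where "a = \<phi> (SOME u. u \<in> verts G)"
    have "\<phi> v = a" if "v \<in> verts G" for v
      using const that someI[of "\<lambda>u. u \<in> verts G" v] unfolding a_def by blast
    then have "N (\<lambda>v. \<phi> v - a) = 0" by (intro N_eq_0) simp
    then show ?thesis by (intro exI[of _ a]) (simp add: edge_variation_nonneg[OF wt_nonneg])
  next
    case False
    then obtain y0 y1 where "y0 < y1" and B: "{v \<in> verts G. y0 < \<phi> v} \<noteq> {}" "{v \<in> verts G. y0 < \<phi> v} \<subset> verts G"
      and levels: "\<And>v. v \<in> verts G \<Longrightarrow> \<phi> v = y0 \<or> y1 \<le> \<phi> v"
      and card: "card ((\<lambda>v. max (\<phi> v) y1) ` verts G) < card (\<phi> ` verts G)"
      using two_lowest_levels[OF finite_verts] by blast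
    define B where "B = {v \<in> verts G. y0 < \<phi> v}"
    define d where "d = y1 - y0"
    have "0 \<le> d" using \<open>y0 < y1\<close> unfolding d_def by simp
    obtain a1 where a1: "\<kappa> * N (\<lambda>v. max (\<phi> v) y1 - a1) \<le> edge_variation G (\<lambda>v. max (\<phi> v) y1)"
      using less(1)[OF card] by blast
    obtain b where b: "\<kappa> * N (\<lambda>v. indicator B v - b) \<le> edge_variation G (indicator B)"
      using cuts B unfolding B_def by blast
    have "N (\<lambda>v. \<phi> v - (a1 + d * b - d)) = N (\<lambda>v. (max (\<phi> v) y1 - a1) + d * (indicator B v - b))"
      using \<open>y0 < y1\<close> unfolding B_def d_def
      by (intro N_cong) (auto simp: indicator_def max_def algebra_simps dest: levels)
    also have "\<dots> \<le> N (\<lambda>v. max (\<phi> v) y1 - a1) + d * N (\<lambda>v. indicator B v - b)"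
      using \<open>0 \<le> d\<close> by (rule N_add_scaled_le)
    finally have "\<kappa> * N (\<lambda>v. \<phi> v - (a1 + d * b - d)) \<le>
        \<kappa> * (N (\<lambda>v. max (\<phi> v) y1 - a1) + d * N (\<lambda>v. indicator B v - b))"
      using assms(1) by (rule mult_left_mono)
    also have "\<dots> = \<kappa> * N (\<lambda>v. max (\<phi> v) y1 - a1) + d * (\<kappa> * N (\<lambda>v. indicator B v - b))"
      by (simp add: algebra_simps)
    also have "\<dots> \<le> edge_variation G (\<lambda>v. max (\<phi> v) y1) + d * edge_variation G (indicator B)"
      using a1 b \<open>0 \<le> d\<close> by (intro add_mono mult_left_mono)
    also have "\<dots> = edge_variation G \<phi>"
    proof -
      have "\<phi> v = max (\<phi> v) y1 + (d * indicator {y0<..} (\<phi> v) + (y0 - y1))" if "v \<in> verts G" for v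
        using levels[OF that] \<open>y0 < y1\<close> unfolding d_def by (auto simp: indicator_def max_def)
      from variation_split_layer[OF mono_truncations(1) this \<open>0 \<le> d\<close>] show ?thesis
        unfolding B_def by simp
    qed
    finally show ?thesis by blast
  qed
qed

theorem bound_from_cuts_nonneg:
  assumes "0 \<le> \<kappa>" and P_mono: "\<And>A B. A \<subseteq> B \<Longrightarrow> P B \<Longrightarrow> P A"
    and cuts: "\<And>B. B \<subseteq> verts G \<Longrightarrow> B \<noteq> {} \<Longrightarrow> P B \<Longrightarrow> \<kappa> * N (indicator B) \<le> edge_variation G (indicator B)"
  shows "(\<And>v. v \<in> verts G \<Longrightarrow> 0 \<le> \<phi> v) \<Longrightarrow> P {v \<in> verts G. 0 < \<phi> v} \<Longrightarrow> \<kappa> * N \<phi> \<le> edge_variation G \<phi>"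
proof (induction "card {v \<in> verts G. 0 < \<phi> v}" arbitrary: \<phi> rule: less_induct)
  case less
  define B where "B = {v \<in> verts G. 0 < \<phi> v}"
  show ?case
  proof (cases "B = {}")
    case True
    then have "N \<phi> = 0" using less.prems(1) unfolding B_def by (intro N_eq_0) force
    then show ?thesis using edge_variation_nonneg[OF wt_nonneg] by simp
  next
    case False
    obtain y where "0 < y" and levels: "\<And>v. v \<in> verts G \<Longrightarrow> \<phi> v = 0 \<or> y \<le> \<phi> v"
      and smaller: "{v \<in> verts G. 0 < max (\<phi> v - y) 0} \<subset> B"
      using lowest_positive_level[OF finite_verts less.prems(1) False[unfolded B_def]]
      unfolding B_def by blast
    have "card {v \<in> verts G. 0 < max (\<phi> v - y) 0} < card B"
      using smaller finite_verts by (simp add: psubset_card_mono B_def)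
    moreover have "P {v \<in> verts G. 0 < max (\<phi> v - y) 0}"
      using P_mono[OF _ less.prems(2)] smaller unfolding B_def by blast
    ultimately have IH: "\<kappa> * N (\<lambda>v. max (\<phi> v - y) 0) \<le> edge_variation G (\<lambda>v. max (\<phi> v - y) 0)"
      using less.hyps unfolding B_def by simp
    have hB: "\<kappa> * N (indicator B) \<le> edge_variation G (indicator B)"
      using cuts False less.prems(2) unfolding B_def by auto
    have "N \<phi> = N (\<lambda>v. max (\<phi> v - y) 0 + y * indicator B v)"
      using \<open>0 < y\<close> unfolding B_def by (intro N_cong) (auto simp: indicator_def max_def dest: levels)
    also have "\<dots> \<le> N (\<lambda>v. max (\<phi> v - y) 0) + y * N (indicator B)"
      using \<open>0 < y\<close> by (intro N_add_scaled_le) simp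
    finally have "\<kappa> * N \<phi> \<le> \<kappa> * (N (\<lambda>v. max (\<phi> v - y) 0) + y * N (indicator B))"
      using assms(1) by (rule mult_left_mono)
    also have "\<dots> = \<kappa> * N (\<lambda>v. max (\<phi> v - y) 0) + y * (\<kappa> * N (indicator B))"
      by (simp add: algebra_simps)
    also have "\<dots> \<le> edge_variation G (\<lambda>v. max (\<phi> v - y) 0) + y * edge_variation G (indicator B)"
      using IH hB \<open>0 < y\<close> by (intro add_mono mult_left_mono) auto
    also have "\<dots> = edge_variation G \<phi>"
    proof -
      have "\<phi> v = max (\<phi> v - y) 0 + (y * indicator {0<..} (\<phi> v) + 0)" if "v \<in> verts G" for v
        using levels[OF that] \<open>0 < y\<close> by (auto simp: indicator_def max_def)
      from variation_split_layer[OF mono_truncations(2) this] \<open>0 < y\<close> show ?thesis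
        unfolding B_def by simp
    qed
    finally show ?thesis .
  qed
qed

theorem bound_from_cuts_split:
  assumes "0 \<le> \<kappa>" and P_mono: "\<And>A B. A \<subseteq> B \<Longrightarrow> P B \<Longrightarrow> P A"
    and cuts: "\<And>B. B \<subseteq> verts G \<Longrightarrow> B \<noteq> {} \<Longrightarrow> P B \<Longrightarrow> \<kappa> * N (indicator B) \<le> edge_variation G (indicator B)"
    and "P {v \<in> verts G. 0 < \<phi> v}" and "P {v \<in> verts G. \<phi> v < 0}"
  shows "\<kappa> * N \<phi> \<le> edge_variation G \<phi>"
proof -
  note nonneg = bound_from_cuts_nonneg[where P=P, OF assms(1) P_mono cuts]
  have sets: "{v \<in> verts G. 0 < max (\<phi> v) 0} = {v \<in> verts G. 0 < \<phi> v}"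
    "{v \<in> verts G. 0 < max (- \<phi> v) 0} = {v \<in> verts G. \<phi> v < 0}" by auto
  have pos: "\<kappa> * N (\<lambda>v. max (\<phi> v) 0) \<le> edge_variation G (\<lambda>v. max (\<phi> v) 0)"
    by (rule nonneg) (use assms(4) sets in simp_all)
  have neg: "\<kappa> * N (\<lambda>v. max (- \<phi> v) 0) \<le> edge_variation G (\<lambda>v. max (- \<phi> v) 0)"
    by (rule nonneg) (use assms(5) sets in simp_all)
  have "N \<phi> = N (\<lambda>v. max (\<phi> v) 0 + (-1) * max (- \<phi> v) 0)"
    by (intro N_cong) auto
  also have "\<dots> \<le> N (\<lambda>v. max (\<phi> v) 0) + N (\<lambda>v. max (- \<phi> v) 0)"
    using N_triangle N_scale[of "-1"] by (metis (no_types) abs_neg_one mult_1)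
  finally have "\<kappa> * N \<phi> \<le> \<kappa> * (N (\<lambda>v. max (\<phi> v) 0) + N (\<lambda>v. max (- \<phi> v) 0))"
    using assms(1) by (rule mult_left_mono)
  also have "\<dots> = \<kappa> * N (\<lambda>v. max (\<phi> v) 0) + \<kappa> * N (\<lambda>v. max (- \<phi> v) 0)"
    by (simp add: algebra_simps)
  also have "\<dots> \<le> edge_variation G (\<lambda>v. max (\<phi> v) 0) + edge_variation G (\<lambda>v. max (- \<phi> v) 0)"
    using pos neg by simp
  also have "\<dots> = edge_variation G \<phi>"
  proof -
    have "edge_variation G (\<lambda>v. min (\<phi> v) 0) = edge_variation G (\<lambda>v. (-1) * max (- \<phi> v) 0 + 0)"
      by (rule arg_cong[where f="edge_variation G"]) (auto simp: fun_eq_iff)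
    also have "\<dots> = edge_variation G (\<lambda>v. max (- \<phi> v) 0)"
      by (simp only: edge_variation_affine abs_neg_one mult_1)
    finally have "edge_variation G (\<lambda>v. min (\<phi> v) 0) = edge_variation G (\<lambda>v. max (- \<phi> v) 0)" .
    moreover have "edge_variation G \<phi> = edge_variation G (\<lambda>v. max (\<phi> v) 0 + min (\<phi> v) 0)"
      by (rule arg_cong[where f="edge_variation G"]) (auto simp: fun_eq_iff)
    moreover have "\<dots> = edge_variation G (\<lambda>v. max (\<phi> v) 0) + edge_variation G (\<lambda>v. min (\<phi> v) 0)"
      using edge_variation_add_mono_comp[OF mono_truncations(1,3), where G=G and \<phi>=\<phi>]
      unfolding o_def .
    ultimately show ?thesis by linarith
  qed
  finally show ?thesis .
qed

end

definition lq_norm :: "'v set \<Rightarrow> ('v \<Rightarrow> real) \<Rightarrow> ereal \<Rightarrow> ('v \<Rightarrow> real) \<Rightarrow> real" where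
  "lq_norm V m q \<phi> = (if q = \<infinity> then Max (insert 0 ((\<lambda>v. \<bar>\<phi> v\<bar>) ` V))
     else (\<Sum>v\<in>V. m v * \<bar>\<phi> v\<bar> powr real_of_ereal q) powr (1 / real_of_ereal q))"

lemma vnorm_eq_lq_norm: "vnorm G q f = lq_norm (verts G) (vmeas G) q (\<lambda>v. f (VertPt v))"
  by (simp add: vnorm_def lq_norm_def)

lemma lq_norm_cong: "(\<And>v. v \<in> V \<Longrightarrow> \<phi> v = \<psi> v) \<Longrightarrow> lq_norm V m q \<phi> = lq_norm V m q \<psi>"
  unfolding lq_norm_def by (simp cong: image_cong sum.cong)

lemma lq_norm_nonneg: "finite V \<Longrightarrow> 0 \<le> lq_norm V m q \<phi>"
  unfolding lq_norm_def by (auto intro: Max_ge)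

lemma ereal_ge_1_cases:
  fixes q :: ereal
  assumes "1 \<le> q"
  obtains "q = \<infinity>" | r where "q = ereal r" and "1 \<le> r"
  using assms by (cases q) auto

lemma sup_norm_le:
  fixes K :: real
  assumes "finite V" and "0 \<le> K" and "\<And>v. v \<in> V \<Longrightarrow> \<bar>\<phi> v\<bar> \<le> K"
  shows "lq_norm V m \<infinity> \<phi> \<le> K"
  unfolding lq_norm_def using assms by simp

lemma sup_norm_ge: "finite V \<Longrightarrow> v \<in> V \<Longrightarrow> \<bar>\<phi> v\<bar> \<le> lq_norm V m \<infinity> \<phi>"
  unfolding lq_norm_def by simp

lemma lq_norm_scale:
  assumes "finite V" and "1 \<le> q"
  shows "lq_norm V m q (\<lambda>v. c * \<phi> v) = \<bar>c\<bar> * lq_norm V m q \<phi>"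
  using assms(2)
proof (cases rule: ereal_ge_1_cases)
  case 1
  have "lq_norm V m \<infinity> (\<lambda>v. c * \<phi> v) \<le> \<bar>c\<bar> * lq_norm V m \<infinity> \<phi>"
    using assms(1) by (intro sup_norm_le) (auto simp: abs_mult lq_norm_nonneg intro: mult_left_mono sup_norm_ge)
  moreover have "\<bar>c\<bar> * lq_norm V m \<infinity> \<phi> \<le> lq_norm V m \<infinity> (\<lambda>v. c * \<phi> v)"
  proof (cases "c = 0")
    case False
    have "lq_norm V m \<infinity> \<phi> \<le> lq_norm V m \<infinity> (\<lambda>v. c * \<phi> v) / \<bar>c\<bar>"
      using assms(1) False sup_norm_ge[OF assms(1), of _ "\<lambda>v. c * \<phi> v"]
      by (intro sup_norm_le) (auto simp: abs_mult field_simps lq_norm_nonneg)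
    then show ?thesis using False by (simp add: field_simps)
  qed (simp add: lq_norm_nonneg assms(1))
  ultimately show ?thesis using 1 by simp
next
  case (2 r)
  have "(\<Sum>v\<in>V. m v * \<bar>c * \<phi> v\<bar> powr r) = \<bar>c\<bar> powr r * (\<Sum>v\<in>V. m v * \<bar>\<phi> v\<bar> powr r)"
    by (simp add: abs_mult powr_mult sum_distrib_left mult.left_commute)
  moreover have "(\<bar>c\<bar> powr r * S) powr (1 / r) = \<bar>c\<bar> * S powr (1 / r)" for S
    using 2 by (simp add: powr_mult powr_powr)
  ultimately show ?thesis unfolding lq_norm_def using 2 by simp
qed

lemma convex_powr_combination:
  fixes x y l r :: real
  assumes "0 \<le> x" "0 \<le> y" "0 \<le> l" "l \<le> 1" "1 \<le> r"
  shows "(l * x + (1 - l) * y) powr r \<le> l * x powr r + (1 - l) * y powr r"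
proof (cases "x = 0 \<or> y = 0")
  case True
  have scaled: "(t * z) powr r \<le> t * z powr r" if "0 \<le> z" "0 \<le> t" "t \<le> 1" for z t :: real
  proof (cases "t = 0")
    case False
    then have "t powr r \<le> t" using powr_le_one_le[of t r] that assms(5) by simp
    then show ?thesis using that by (simp add: powr_mult mult_right_mono)
  qed simp
  from True show ?thesis
    using scaled[of y "1 - l"] scaled[of x l] assms by auto
next
  case False
  then have "0 < x" "0 < y" using assms by auto
  then show ?thesis using convex_onD[OF powr_convex[OF assms(5)], of "1 - l" x y] assms
    by (simp add: algebra_simps)
qed

lemma weighted_Minkowski:
  fixes \<phi> \<psi> :: "'v \<Rightarrow> real"
  assumes "finite V" and "\<And>v. v \<in> V \<Longrightarrow> 0 \<le> m v" and "1 \<le> r"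
  defines "S \<equiv> \<lambda>\<phi>. \<Sum>v\<in>V. m v * \<bar>\<phi> v\<bar> powr r"
  shows "S (\<lambda>v. \<phi> v + \<psi> v) powr (1 / r) \<le> S \<phi> powr (1 / r) + S \<psi> powr (1 / r)"
proof -
  have S_nonneg: "0 \<le> S \<zeta>" for \<zeta> unfolding S_def using assms(2) by (intro sum_nonneg) auto
  have S_add_null: "S (\<lambda>v. \<zeta> v + \<xi> v) = S \<xi>" if "S \<zeta> = 0" for \<zeta> \<xi>
  proof -
    have "m v * \<bar>\<zeta> v\<bar> powr r = 0" if "v \<in> V" for v
      using \<open>S \<zeta> = 0\<close> that assms(1,2) unfolding S_def by (simp add: sum_nonneg_eq_0_iff)
    then have "m v * \<bar>\<zeta> v + \<xi> v\<bar> powr r = m v * \<bar>\<xi> v\<bar> powr r" if "v \<in> V" for v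
      using that by fastforce
    then show ?thesis unfolding S_def by (rule sum.cong[OF refl])
  qed
  define A where "A = S \<phi> powr (1 / r)"
  define B where "B = S \<psi> powr (1 / r)"
  have SA: "S \<phi> = A powr r" and SB: "S \<psi> = B powr r"
    unfolding A_def B_def using S_nonneg assms(3) by (simp_all add: powr_powr)
  show ?thesis
  proof (cases "A = 0 \<or> B = 0")
    case True
    then show ?thesis
    proof
      assume "A = 0"
      then have "S \<phi> = 0" unfolding A_def by simp
      then show ?thesis using S_add_null[of \<phi> \<psi>] unfolding A_def B_def by simp
    next
      assume "B = 0"
      then have "S \<psi> = 0" unfolding B_def by simp
      then show ?thesis using S_add_null[of \<psi> \<phi>] unfolding A_def B_def by (simp add: add.commute)
    qed
  next
    case False
    then have "0 < A" "0 < B" unfolding A_def B_def by auto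
    define l where "l = A / (A + B)"
    have l: "0 \<le> l" "l \<le> 1" "1 - l = B / (A + B)"
      using \<open>0 < A\<close> \<open>0 < B\<close> unfolding l_def by (auto simp: field_simps)
    have pointwise: "(\<bar>\<phi> v + \<psi> v\<bar> / (A + B)) powr r \<le> l * (\<bar>\<phi> v\<bar> / A) powr r + (1 - l) * (\<bar>\<psi> v\<bar> / B) powr r"
      for v
    proof -
      have "\<bar>\<phi> v + \<psi> v\<bar> / (A + B) \<le> l * (\<bar>\<phi> v\<bar> / A) + (1 - l) * (\<bar>\<psi> v\<bar> / B)"
        using \<open>0 < A\<close> \<open>0 < B\<close> unfolding l(3) unfolding l_def
        by (simp add: add_divide_distrib[symmetric] divide_right_mono)
      then have "(\<bar>\<phi> v + \<psi> v\<bar> / (A + B)) powr r \<le> (l * (\<bar>\<phi> v\<bar> / A) + (1 - l) * (\<bar>\<psi> v\<bar> / B)) powr r"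
        using assms(3) \<open>0 < A\<close> \<open>0 < B\<close> by (intro powr_mono2) auto
      also have "\<dots> \<le> l * (\<bar>\<phi> v\<bar> / A) powr r + (1 - l) * (\<bar>\<psi> v\<bar> / B) powr r"
        using l \<open>0 < A\<close> \<open>0 < B\<close> assms(3) by (intro convex_powr_combination) auto
      finally show ?thesis .
    qed
    have "S (\<lambda>v. \<phi> v + \<psi> v) / (A + B) powr r = (\<Sum>v\<in>V. m v * (\<bar>\<phi> v + \<psi> v\<bar> / (A + B)) powr r)"
      unfolding S_def using \<open>0 < A\<close> \<open>0 < B\<close> by (simp add: powr_divide sum_divide_distrib)
    also have "\<dots> \<le> (\<Sum>v\<in>V. m v * (l * (\<bar>\<phi> v\<bar> / A) powr r + (1 - l) * (\<bar>\<psi> v\<bar> / B) powr r))"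
      using assms(2) pointwise by (intro sum_mono mult_left_mono) auto
    also have "\<dots> = l * (S \<phi> / A powr r) + (1 - l) * (S \<psi> / B powr r)"
      unfolding S_def using \<open>0 < A\<close> \<open>0 < B\<close>
      by (simp add: powr_divide sum_divide_distrib sum_distrib_left sum.distrib algebra_simps)
    also have "\<dots> = 1" using \<open>0 < A\<close> \<open>0 < B\<close> unfolding SA SB by simp
    finally have "S (\<lambda>v. \<phi> v + \<psi> v) \<le> (A + B) powr r" using \<open>0 < A\<close> \<open>0 < B\<close> by (simp add: divide_le_eq)
    then have "S (\<lambda>v. \<phi> v + \<psi> v) powr (1 / r) \<le> ((A + B) powr r) powr (1 / r)"
      using assms(3) S_nonneg by (intro powr_mono2) auto
    also have "\<dots> = A + B" using assms(3) \<open>0 < A\<close> \<open>0 < B\<close> by (simp add: powr_powr)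
    finally show ?thesis unfolding A_def B_def .
  qed
qed

lemma lq_norm_triangle:
  assumes "finite V" and "\<And>v. v \<in> V \<Longrightarrow> 0 \<le> m v" and "1 \<le> q"
  shows "lq_norm V m q (\<lambda>v. \<phi> v + \<psi> v) \<le> lq_norm V m q \<phi> + lq_norm V m q \<psi>"
  using assms(3)
proof (cases rule: ereal_ge_1_cases)
  case 1
  have "\<bar>\<phi> v + \<psi> v\<bar> \<le> lq_norm V m \<infinity> \<phi> + lq_norm V m \<infinity> \<psi>" if "v \<in> V" for v
    using abs_triangle_ineq[of "\<phi> v" "\<psi> v"] sup_norm_ge[OF assms(1) that, of \<phi> m]
      sup_norm_ge[OF assms(1) that, of \<psi> m] by linarith
  then show ?thesis
    using 1 assms(1) by (simp add: sup_norm_le add_nonneg_nonneg lq_norm_nonneg)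
next
  case (2 r)
  then show ?thesis
    unfolding lq_norm_def using weighted_Minkowski[OF assms(1,2), where r=r and \<phi>=\<phi> and \<psi>=\<psi>] by simp
qed

lemma graph_seminorm_lq_norm:
  assumes "closed_graph G" and "1 \<le> q"
  shows "graph_seminorm G (lq_norm (verts G) (vmeas G) q)"
proof
  have vmeas: "0 \<le> vmeas G v" if "v \<in> verts G" for v
    using assms(1) that unfolding closed_graph_def by (simp add: less_imp_le)
  show "finite (verts G)" using assms(1) unfolding closed_graph_def by simp
  then show "lq_norm (verts G) (vmeas G) q (\<lambda>v. \<phi> v + \<psi> v) \<le>
      lq_norm (verts G) (vmeas G) q \<phi> + lq_norm (verts G) (vmeas G) q \<psi>" for \<phi> \<psi>
    using vmeas assms(2) by (rule lq_norm_triangle)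
  show "lq_norm (verts G) (vmeas G) q (\<lambda>v. c * \<phi> v) = \<bar>c\<bar> * lq_norm (verts G) (vmeas G) q \<phi>" for c \<phi>
    using \<open>finite (verts G)\<close> assms(2) by (rule lq_norm_scale)
qed (use assms(1) in \<open>auto simp: closed_graph_def less_imp_le intro: lq_norm_cong\<close>)

lemma lq_norm_indicator:
  assumes "finite V" and "\<And>v. v \<in> V \<Longrightarrow> 0 < m v" and "1 \<le> q" and "B \<subseteq> V" and "B \<noteq> {}"
  shows "lq_norm V m q (indicator B) = sum m B powr inv_exp q"
  using assms(3)
proof (cases rule: ereal_ge_1_cases)
  case 1
  have "0 < sum m B"
    using assms by (intro sum_pos) (auto intro: finite_subset)
  moreover have "lq_norm V m \<infinity> (indicator B) = 1"
  proof (rule antisym)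
    show "lq_norm V m \<infinity> (indicator B) \<le> 1" using assms(1) by (intro sup_norm_le) auto
    obtain v where "v \<in> B" using assms(5) by auto
    then show "1 \<le> lq_norm V m \<infinity> (indicator B)"
      using sup_norm_ge[OF assms(1), of v "indicator B" m] assms(4) by auto
  qed
  ultimately show ?thesis using 1 by (simp add: inv_exp_def)
next
  case (2 r)
  have "m v * \<bar>indicator B v :: real\<bar> powr r = (if v \<in> B then m v else 0)" for v
    using 2 by (simp add: indicator_def)
  then have "(\<Sum>v\<in>V. m v * \<bar>indicator B v :: real\<bar> powr r) = sum m B"
    using assms(1,4) by (simp add: sum.inter_restrict[symmetric] Int_absorb1)
  then show ?thesis using 2 unfolding lq_norm_def inv_exp_def by simp
qed

lemma lq_norm_shifted_indicator:
  assumes "finite V" and "B \<subseteq> V"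
  shows "lq_norm V m (ereal r) (\<lambda>v. indicator B v - a) =
    (sum m B * \<bar>1 - a\<bar> powr r + sum m (V - B) * \<bar>a\<bar> powr r) powr (1 / r)"
proof -
  have "(\<Sum>v\<in>V. m v * \<bar>indicator B v - a\<bar> powr r) =
      (\<Sum>v\<in>B. m v * \<bar>1 - a\<bar> powr r) + (\<Sum>v\<in>V - B. m v * \<bar>a\<bar> powr r)"
    using assms by (simp add: sum.subset_diff[of B V] add.commute)
  then show ?thesis unfolding lq_norm_def by (simp add: sum_distrib_right)
qed

lemma sup_norm_shifted_indicator:
  assumes "finite V" and "B \<subseteq> V" and "B \<noteq> {}" and "V - B \<noteq> {}"
  shows "lq_norm V m \<infinity> (\<lambda>v. indicator B v - a) = max \<bar>1 - a\<bar> \<bar>a\<bar>"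
proof (rule antisym)
  show "lq_norm V m \<infinity> (\<lambda>v. indicator B v - a) \<le> max \<bar>1 - a\<bar> \<bar>a\<bar>"
    using assms(1) by (intro sup_norm_le) (auto simp: indicator_def)
  obtain u w where "u \<in> B" "w \<in> V - B" using assms(3,4) by auto
  then show "max \<bar>1 - a\<bar> \<bar>a\<bar> \<le> lq_norm V m \<infinity> (\<lambda>v. indicator B v - a)"
    using sup_norm_ge[OF assms(1), of u "\<lambda>v. indicator B v - a" m]
      sup_norm_ge[OF assms(1), of w "\<lambda>v. indicator B v - a" m] assms(2) by auto
qed

lemma exponent_cases:
  fixes \<nu> :: ereal
  assumes "1 \<le> \<nu>"
  obtains "\<nu> = \<infinity>" | "\<nu> = 1" | p where "\<nu> = ereal p" and "1 < p"
  using assms by (cases \<nu>) (auto simp: one_ereal_def order_le_less)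

lemma one_le_dual_exp: "1 \<le> \<nu> \<Longrightarrow> 1 \<le> dual_exp \<nu>"
  by (erule exponent_cases) (auto simp: dual_exp_def one_ereal_def field_simps)

lemma inv_exp_dual_exp: "1 \<le> \<nu> \<Longrightarrow> inv_exp (dual_exp \<nu>) = 1 - inv_exp \<nu>"
  by (erule exponent_cases) (auto simp: inv_exp_def dual_exp_def one_ereal_def field_simps)

lemma powr_sum_le_weighted:
  fixes X Y l r :: real
  assumes "0 < l" "l < 1" "0 \<le> X" "0 \<le> Y" "1 \<le> r"
  shows "(X + Y) powr r \<le> l powr (1 - r) * X powr r + (1 - l) powr (1 - r) * Y powr r"
proof -
  have "(X + Y) powr r = (l * (X / l) + (1 - l) * (Y / (1 - l))) powr r" using assms by simp
  also have "\<dots> \<le> l * (X / l) powr r + (1 - l) * (Y / (1 - l)) powr r"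
    using assms by (intro convex_powr_combination) auto
  also have "\<dots> = l powr (1 - r) * X powr r + (1 - l) powr (1 - r) * Y powr r"
    using assms by (simp add: powr_divide powr_diff)
  finally show ?thesis .
qed

lemma two_point_l1_min:
  fixes x y :: real
  assumes "0 < x" "0 < y"
  shows "min x y \<le> x * \<bar>1 - a\<bar> + y * \<bar>a\<bar>" and "\<exists>a. x * \<bar>1 - a\<bar> + y * \<bar>a\<bar> = min x y"
proof -
  have "min x y * 1 \<le> min x y * (\<bar>1 - a\<bar> + \<bar>a\<bar>)"
    using assms by (intro mult_left_mono) auto
  also have "\<dots> \<le> x * \<bar>1 - a\<bar> + y * \<bar>a\<bar>"
    by (simp add: distrib_left add_mono mult_right_mono)
  finally show "min x y \<le> x * \<bar>1 - a\<bar> + y * \<bar>a\<bar>" by simp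
  show "\<exists>a. x * \<bar>1 - a\<bar> + y * \<bar>a\<bar> = min x y"
    by (rule exI[where x = "if x \<le> y then 0 else 1"]) (auto simp: min_def)
qed

lemma two_point_max_min:
  fixes a :: real
  shows "1 / 2 \<le> max \<bar>1 - a\<bar> \<bar>a\<bar>" and "\<exists>a::real. max \<bar>1 - a\<bar> \<bar>a\<bar> = 1 / 2"
proof -
  have "1 \<le> \<bar>1 - a\<bar> + \<bar>a\<bar>" using abs_triangle_ineq[of "1 - a" a] by simp
  then show "1 / 2 \<le> max \<bar>1 - a\<bar> \<bar>a\<bar>" by (auto simp: max_def)
  show "\<exists>a::real. max \<bar>1 - a\<bar> \<bar>a\<bar> = 1 / 2" by (rule exI[where x = "1 / 2"]) simp
qed

text \<open>For \<open>r = p / (p - 1)\<close> the minimum over \<open>a\<close> is attained at \<open>a = 1 - l\<close>, where \<open>l\<close> is the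
  share of \<open>x\<^sup>1\<^sup>-\<^sup>p\<close> in \<open>x\<^sup>1\<^sup>-\<^sup>p + y\<^sup>1\<^sup>-\<^sup>p\<close>; the lower bound is convexity of \<open>t\<^sup>r\<close> with these weights.\<close>

lemma two_point_lr_min:
  fixes x y p :: real
  assumes "0 < x" "0 < y" "1 < p"
  defines "r \<equiv> p / (p - 1)" and "c \<equiv> 1 / (x powr (1 - p) + y powr (1 - p)) powr (1 / p)"
  shows "c \<le> (x * \<bar>1 - a\<bar> powr r + y * \<bar>a\<bar> powr r) powr (1 / r)"
    and "\<exists>a. (x * \<bar>1 - a\<bar> powr r + y * \<bar>a\<bar> powr r) powr (1 / r) = c"
proof -
  have "1 < r" and r_conj: "(1 - p) * (1 - r) = 1" and "(1 - r) / r = - (1 / p)"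
    using assms(3) unfolding r_def by (auto simp: field_simps)
  define S where "S = x powr (1 - p) + y powr (1 - p)"
  define l where "l = x powr (1 - p) / S"
  have "0 < S" unfolding S_def using assms(1,2) by (intro add_pos_pos) simp_all
  have l: "0 < l" "l < 1" "1 - l = y powr (1 - p) / S"
    using assms(1,2) \<open>0 < S\<close> unfolding l_def by (auto simp: field_simps S_def)
  have "l * S = x powr (1 - p)" "(1 - l) * S = y powr (1 - p)"
    using \<open>0 < S\<close> unfolding l(3) unfolding l_def by simp_all
  then have "x = (l * S) powr (1 - r)" and "y = ((1 - l) * S) powr (1 - r)"
    using assms(1,2) r_conj by (simp_all add: powr_powr)
  then have xy: "x = l powr (1 - r) * S powr (1 - r)" "y = (1 - l) powr (1 - r) * S powr (1 - r)"
    using l(1,2) \<open>0 < S\<close> by (simp_all add: powr_mult)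
  define f where "f a = l powr (1 - r) * \<bar>1 - a\<bar> powr r + (1 - l) powr (1 - r) * \<bar>a\<bar> powr r" for a
  have rescale: "x * \<bar>1 - a\<bar> powr r + y * \<bar>a\<bar> powr r = S powr (1 - r) * f a" for a
    unfolding f_def by (simp add: xy algebra_simps)
  have c: "c = (S powr (1 - r) * 1) powr (1 / r)"
    using \<open>0 < S\<close> \<open>(1 - r) / r = - (1 / p)\<close> unfolding c_def S_def[symmetric]
    by (simp add: powr_powr powr_minus_divide)
  have "1 \<le> f a"
  proof -
    have "1 \<le> (\<bar>1 - a\<bar> + \<bar>a\<bar>) powr r" using \<open>1 < r\<close> by (intro ge_one_powr_ge_zero) auto
    also have "\<dots> \<le> f a" unfolding f_def using l \<open>1 < r\<close> by (intro powr_sum_le_weighted) auto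
    finally show ?thesis .
  qed
  then show "c \<le> (x * \<bar>1 - a\<bar> powr r + y * \<bar>a\<bar> powr r) powr (1 / r)"
    unfolding c rescale using \<open>0 < S\<close> \<open>1 < r\<close> by (intro powr_mono2 mult_left_mono) auto
  have "f (1 - l) = 1"
    using l(1,2) unfolding f_def by (simp add: powr_add[symmetric])
  then show "\<exists>a. (x * \<bar>1 - a\<bar> powr r + y * \<bar>a\<bar> powr r) powr (1 / r) = c"
    unfolding c rescale by (intro exI[of _ "1 - l"]) simp
qed

definition Itilde'_weight :: "ereal \<Rightarrow> real \<Rightarrow> real \<Rightarrow> real" where
  "Itilde'_weight \<nu> x y = (if \<nu> = \<infinity> then 1 / min x y
     else (x powr (1 - real_of_ereal \<nu>) + y powr (1 - real_of_ereal \<nu>)) powr (1 / real_of_ereal \<nu>))"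

lemma Itilde'_weight_bounds:
  fixes x y :: real
  assumes "1 \<le> \<nu>" and "0 < x" and "0 < y"
  shows "min x y powr (inv_exp \<nu> - 1) \<le> Itilde'_weight \<nu> x y"
    and "Itilde'_weight \<nu> x y \<le> 2 powr inv_exp \<nu> * min x y powr (inv_exp \<nu> - 1)"
proof -
  define t where "t = min x y"
  have t: "0 < t" "t \<le> x" "t \<le> y" "t = x \<or> t = y" unfolding t_def using assms by auto
  have "t powr (inv_exp \<nu> - 1) \<le> Itilde'_weight \<nu> x y \<and>
      Itilde'_weight \<nu> x y \<le> 2 powr inv_exp \<nu> * t powr (inv_exp \<nu> - 1)"
  proof (cases "\<nu> = \<infinity>")
    case True
    then show ?thesis using t by (simp add: Itilde'_weight_def inv_exp_def powr_minus_divide t_def)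
  next
    case False
    then obtain p where p: "\<nu> = ereal p" "1 \<le> p" using assms(1) by (cases \<nu>) auto
    have ax: "x powr (1 - p) \<le> t powr (1 - p)" and ay: "y powr (1 - p) \<le> t powr (1 - p)"
      using t p(2) by (auto intro: powr_mono2')
    have lower: "t powr (1 - p) \<le> x powr (1 - p) + y powr (1 - p)" using t(4) by auto
    have t_powr: "(c * t powr (1 - p)) powr (1 / p) = c powr (1 / p) * t powr (1 / p - 1)" if "0 \<le> c" for c
      using that p(2) t(1) by (simp add: powr_mult powr_powr field_simps)
    have "(1 * t powr (1 - p)) powr (1 / p) \<le> (x powr (1 - p) + y powr (1 - p)) powr (1 / p)"
      using lower p(2) by (intro powr_mono2) auto
    moreover have "(x powr (1 - p) + y powr (1 - p)) powr (1 / p) \<le> (2 * t powr (1 - p)) powr (1 / p)"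
      using ax ay p(2) by (intro powr_mono2) auto
    ultimately have "t powr (1 / p - 1) \<le> (x powr (1 - p) + y powr (1 - p)) powr (1 / p)"
      and "(x powr (1 - p) + y powr (1 - p)) powr (1 / p) \<le> 2 powr (1 / p) * t powr (1 / p - 1)"
      using t_powr[of 1] t_powr[of 2] by simp_all
    then show ?thesis using p by (simp add: Itilde'_weight_def inv_exp_def)
  qed
  then show "min x y powr (inv_exp \<nu> - 1) \<le> Itilde'_weight \<nu> x y"
    and "Itilde'_weight \<nu> x y \<le> 2 powr inv_exp \<nu> * min x y powr (inv_exp \<nu> - 1)"
    unfolding t_def by auto
qed

lemma Itilde'_weight_pos: "1 \<le> \<nu> \<Longrightarrow> 0 < x \<Longrightarrow> 0 < y \<Longrightarrow> 0 < Itilde'_weight \<nu> x y"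
  using Itilde'_weight_bounds(1)[of \<nu> x y] by (smt (verit) min_def powr_gt_zero)

lemma shifted_indicator_norm_min:
  assumes "1 \<le> \<nu>" and "finite V" and "\<And>v. v \<in> V \<Longrightarrow> 0 < m v"
    and "B \<subseteq> V" and "B \<noteq> {}" and "V - B \<noteq> {}"
  defines "c \<equiv> 1 / Itilde'_weight \<nu> (sum m B) (sum m (V - B))"
  shows "c \<le> lq_norm V m (dual_exp \<nu>) (\<lambda>v. indicator B v - a)"
    and "\<exists>a. lq_norm V m (dual_exp \<nu>) (\<lambda>v. indicator B v - a) = c"
proof -
  define x y where "x = sum m B" and "y = sum m (V - B)"
  have "0 < x" "0 < y"
    unfolding x_def y_def using assms(2-6) by (auto intro!: sum_pos intro: finite_subset)
  note shifted = lq_norm_shifted_indicator[OF assms(2,4), of m, folded x_def y_def]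
  have "(\<forall>a. c \<le> lq_norm V m (dual_exp \<nu>) (\<lambda>v. indicator B v - a)) \<and>
      (\<exists>a. lq_norm V m (dual_exp \<nu>) (\<lambda>v. indicator B v - a) = c)"
    using assms(1)
  proof (cases rule: exponent_cases)
    case 1
    have "dual_exp \<nu> = ereal 1" using 1 by (simp add: dual_exp_def one_ereal_def)
    moreover have "0 \<le> x * \<bar>1 - a\<bar> + y * \<bar>a\<bar>" for a using \<open>0 < x\<close> \<open>0 < y\<close> by simp
    ultimately have "lq_norm V m (dual_exp \<nu>) (\<lambda>v. indicator B v - a) = x * \<bar>1 - a\<bar> + y * \<bar>a\<bar>" for a
      by (simp add: shifted)
    then show ?thesis
      using 1 two_point_l1_min[OF \<open>0 < x\<close> \<open>0 < y\<close>] by (simp add: c_def Itilde'_weight_def x_def y_def)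
  next
    case 2
    then show ?thesis
      using \<open>0 < x\<close> \<open>0 < y\<close> two_point_max_min
      by (simp add: dual_exp_def sup_norm_shifted_indicator[OF assms(2,4-6)] c_def Itilde'_weight_def x_def y_def)
  next
    case (3 p)
    then have "dual_exp \<nu> = ereal (p / (p - 1))" by (simp add: dual_exp_def)
    then show ?thesis
      using 3 two_point_lr_min[OF \<open>0 < x\<close> \<open>0 < y\<close> \<open>1 < p\<close>]
      by (simp add: shifted c_def Itilde'_weight_def x_def y_def)
  qed
  then show "c \<le> lq_norm V m (dual_exp \<nu>) (\<lambda>v. indicator B v - a)"
    and "\<exists>a. lq_norm V m (dual_exp \<nu>) (\<lambda>v. indicator B v - a) = c" by auto
qed

lemma VertPt_in_gpoints [simp]: "VertPt v \<in> gpoints G \<longleftrightarrow> v \<in> verts G"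
  unfolding gpoints_def by auto

lemma EdgePt_in_gpoints [simp]: "EdgePt e t \<in> gpoints G \<longleftrightarrow> e \<in> edges G \<and> 0 < t \<and> t < len G e"
  unfolding gpoints_def by auto

definition linear_extension :: "('v, 'e) mgraph \<Rightarrow> ('v \<Rightarrow> real) \<Rightarrow> ('v, 'e) gpoint \<Rightarrow> real" where
  "linear_extension G \<phi> x = (case x of VertPt v \<Rightarrow> \<phi> v
     | EdgePt e t \<Rightarrow> \<phi> (src G e) + (\<phi> (tgt G e) - \<phi> (src G e)) * t / len G e)"

lemma linear_extension_VertPt [simp]: "linear_extension G \<phi> (VertPt v) = \<phi> v"
  by (simp add: linear_extension_def)

lemma linear_extension_EdgePt [simp]:
  "linear_extension G \<phi> (EdgePt e t) = \<phi> (src G e) + (\<phi> (tgt G e) - \<phi> (src G e)) * t / len G e"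
  by (simp add: linear_extension_def)

lemma linear_extension_dist_ends:
  assumes "0 < len G e"
  shows "\<bar>linear_extension G \<phi> (EdgePt e t) - \<phi> (src G e)\<bar> = \<bar>\<phi> (tgt G e) - \<phi> (src G e)\<bar> / len G e * \<bar>t\<bar>"
    and "\<bar>linear_extension G \<phi> (EdgePt e t) - \<phi> (tgt G e)\<bar> =
      \<bar>\<phi> (tgt G e) - \<phi> (src G e)\<bar> / len G e * \<bar>len G e - t\<bar>"
proof -
  have "linear_extension G \<phi> (EdgePt e t) - \<phi> (src G e) = (\<phi> (tgt G e) - \<phi> (src G e)) / len G e * t"
    and "linear_extension G \<phi> (EdgePt e t) - \<phi> (tgt G e) =
      - ((\<phi> (tgt G e) - \<phi> (src G e)) / len G e * (len G e - t))"
    using assms by (simp_all add: field_simps)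
  then show "\<bar>linear_extension G \<phi> (EdgePt e t) - \<phi> (src G e)\<bar> = \<bar>\<phi> (tgt G e) - \<phi> (src G e)\<bar> / len G e * \<bar>t\<bar>"
    and "\<bar>linear_extension G \<phi> (EdgePt e t) - \<phi> (tgt G e)\<bar> =
      \<bar>\<phi> (tgt G e) - \<phi> (src G e)\<bar> / len G e * \<bar>len G e - t\<bar>"
    using assms by (simp_all only: abs_minus_cancel abs_mult abs_divide)
qed

lemma linear_extension_gcontinuous:
  assumes "closed_graph G"
  shows "gcontinuous G (linear_extension G \<phi>)"
  unfolding gcontinuous_def gopen_def
proof (intro allI impI conjI ballI)
  fix U :: "real set" assume "open U"
  show "{x \<in> gpoints G. linear_extension G \<phi> x \<in> U} \<subseteq> gpoints G" by blast
  have len_pos: "0 < len G e" if "e \<in> edges G" for e using assms that unfolding closed_graph_def by auto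
  show "open {t. 0 < t \<and> t < len G e \<and> EdgePt e t \<in> {x \<in> gpoints G. linear_extension G \<phi> x \<in> U}}"
    if "e \<in> edges G" for e
  proof -
    have "{t. 0 < t \<and> t < len G e \<and> EdgePt e t \<in> {x \<in> gpoints G. linear_extension G \<phi> x \<in> U}} =
        {0<..<len G e} \<inter> (\<lambda>t. \<phi> (src G e) + (\<phi> (tgt G e) - \<phi> (src G e)) * t / len G e) -` U"
      using that by auto
    moreover have "open ({0<..<len G e} \<inter> (\<lambda>t. \<phi> (src G e) + (\<phi> (tgt G e) - \<phi> (src G e)) * t / len G e) -` U)"
      using len_pos[OF that] by (intro open_Int open_greaterThanLessThan open_vimage \<open>open U\<close> continuous_intros) auto
    ultimately show ?thesis by simp
  qed
  fix v assume "v \<in> verts G" and "VertPt v \<in> {x \<in> gpoints G. linear_extension G \<phi> x \<in> U}"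
  then have "\<phi> v \<in> U" by simp
  then obtain r where "0 < r" and r: "ball (\<phi> v) r \<subseteq> U" using \<open>open U\<close> open_contains_ball by blast
  define slope where "slope e = \<bar>\<phi> (tgt G e) - \<phi> (src G e)\<bar> / len G e" for e
  define K where "K = (\<Sum>e\<in>edges G. slope e)"
  have "0 \<le> K" unfolding K_def slope_def using len_pos by (intro sum_nonneg) (simp add: less_imp_le)
  have slope_le: "slope e \<le> K" if "e \<in> edges G" for e
    unfolding K_def using assms that by (intro member_le_sum) (auto simp: closed_graph_def slope_def)
  have near: "EdgePt e t \<in> {x \<in> gpoints G. linear_extension G \<phi> x \<in> U}"
    if "e \<in> edges G" "0 < t" "t < len G e" "slope e * d < r" "d \<ge> 0"
      "\<bar>linear_extension G \<phi> (EdgePt e t) - \<phi> v\<bar> = slope e * d" for e t d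
    using that r by (auto simp: dist_real_def abs_minus_commute)
  have small: "K * d < r" if "0 \<le> d" "d < r / (K + 1)" for d
  proof -
    have "K * d \<le> K * (r / (K + 1))" using that \<open>0 \<le> K\<close> by (intro mult_left_mono) auto
    also have "\<dots> < r" using \<open>0 < r\<close> \<open>0 \<le> K\<close> by (simp add: field_simps)
    finally show ?thesis .
  qed
  show "\<exists>\<epsilon>>0. \<forall>e\<in>edges G.
      (src G e = v \<longrightarrow> (\<forall>t. 0 < t \<and> t < \<epsilon> \<and> t < len G e \<longrightarrow>
          EdgePt e t \<in> {x \<in> gpoints G. linear_extension G \<phi> x \<in> U})) \<and>
      (tgt G e = v \<longrightarrow> (\<forall>t. 0 < t \<and> len G e - \<epsilon> < t \<and> t < len G e \<longrightarrow>
          EdgePt e t \<in> {x \<in> gpoints G. linear_extension G \<phi> x \<in> U}))"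
  proof (intro exI[of _ "r / (K + 1)"] conjI ballI impI allI)
    show "0 < r / (K + 1)" using \<open>0 < r\<close> \<open>0 \<le> K\<close> by simp
  next
    fix e t assume e: "e \<in> edges G" and "src G e = v" and t: "0 < t \<and> t < r / (K + 1) \<and> t < len G e"
    have "slope e * t \<le> K * t" using slope_le[OF e] t by (intro mult_right_mono) auto
    then show "EdgePt e t \<in> {x \<in> gpoints G. linear_extension G \<phi> x \<in> U}"
      using near[of e t t] small[of t] e t \<open>src G e = v\<close> linear_extension_dist_ends(1)[OF len_pos[OF e]]
      unfolding slope_def by auto
  next
    fix e t assume e: "e \<in> edges G" and "tgt G e = v"
      and t: "0 < t \<and> len G e - r / (K + 1) < t \<and> t < len G e"
    have "slope e * (len G e - t) \<le> K * (len G e - t)" using slope_le[OF e] t by (intro mult_right_mono) auto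
    then show "EdgePt e t \<in> {x \<in> gpoints G. linear_extension G \<phi> x \<in> U}"
      using near[of e t "len G e - t"] small[of "len G e - t"] e t \<open>tgt G e = v\<close>
        linear_extension_dist_ends(2)[OF len_pos[OF e]]
      unfolding slope_def by auto
  qed
qed

lemma linear_extension_C1Dir:
  assumes "closed_graph G"
  shows "linear_extension G \<phi> \<in> C1Dir G"
  unfolding C1Dir_def
proof (intro CollectI conjI ballI)
  show "gcontinuous G (linear_extension G \<phi>)" using assms by (rule linear_extension_gcontinuous)
  fix e assume "e \<in> edges G"
  then have "len G e \<noteq> 0" using assms unfolding closed_graph_def by force
  then show "\<exists>g. (\<forall>t\<in>{0<..<len G e}. ((\<lambda>s. linear_extension G \<phi> (EdgePt e s)) has_real_derivative g t) (at t))
      \<and> uniformly_continuous_on {0<..<len G e} g"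
    by (intro exI[of _ "\<lambda>_. (\<phi> (tgt G e) - \<phi> (src G e)) / len G e"] conjI ballI
        uniformly_continuous_on_const) (auto intro!: derivative_eq_intros)
next
  show "\<exists>V0 E0. finite V0 \<and> finite E0 \<and> (\<forall>x\<in>gpoints G. linear_extension G \<phi> x \<noteq> 0 \<longrightarrow>
      (\<exists>v\<in>V0. x = VertPt v) \<or> (\<exists>e\<in>E0. x \<in> edge_interior G e))"
    using assms unfolding closed_graph_def
    by (intro exI[of _ "verts G"] exI[of _ "edges G"]) (auto simp: gpoints_def edge_interior_def)
qed (use assms in \<open>simp add: closed_graph_def\<close>)

lemma grad_norm1_linear_extension:
  assumes "closed_graph G"
  shows "grad_norm1 G (linear_extension G \<phi>) = edge_variation G \<phi>"
  unfolding grad_norm1_def edge_variation_def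
proof (rule sum.cong[OF refl])
  fix e assume "e \<in> edges G"
  then have L: "0 < len G e" using assms unfolding closed_graph_def by auto
  define D where "D = \<phi> (tgt G e) - \<phi> (src G e)"
  have "deriv (\<lambda>s. linear_extension G \<phi> (EdgePt e s)) t = D / len G e" for t
    unfolding D_def using L by (intro DERIV_imp_deriv) (auto intro!: derivative_eq_intros)
  then have "(LBINT t:{0<..<len G e}. \<bar>deriv (\<lambda>s. linear_extension G \<phi> (EdgePt e s)) t\<bar>) =
      measure lborel {0<..<len G e} * \<bar>D / len G e\<bar>"
    using L by (simp add: set_integral_const emeasure_lborel_Ioo)
  also have "\<dots> = \<bar>\<phi> (src G e) - \<phi> (tgt G e)\<bar>" using L by (simp add: D_def abs_minus_commute)
  finally show "wt G e * (LBINT t:{0<..<len G e}. \<bar>deriv (\<lambda>s. linear_extension G \<phi> (EdgePt e s)) t\<bar>) =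
      wt G e * \<bar>\<phi> (src G e) - \<phi> (tgt G e)\<bar>" by simp
qed

lemma abs_diff_le_integral_abs_derivative:
  fixes h g :: "real \<Rightarrow> real"
  assumes "a < b" and "continuous_on {a..b} h"
    and "\<And>t. t \<in> {a<..<b} \<Longrightarrow> (h has_real_derivative g t) (at t)"
    and "uniformly_continuous_on {a<..<b} g"
  shows "\<bar>h b - h a\<bar> \<le> (LBINT t:{a<..<b}. \<bar>g t\<bar>)"
proof -
  obtain g' where g': "uniformly_continuous_on (closure {a<..<b}) g'" "\<And>t. t \<in> {a<..<b} \<Longrightarrow> g t = g' t"
    using uniformly_continuous_on_extension_on_closure[OF assms(4)] by metis
  have cont: "continuous_on {a..b} g'" using uniformly_continuous_imp_continuous[OF g'(1)] assms(1) by simp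
  then have cont_abs: "continuous_on {a..b} (\<lambda>t. \<bar>g' t\<bar>)" by (rule continuous_on_rabs)
  have "(g' has_integral (h b - h a)) {a..b}"
    using assms(1,2) assms(3)[THEN has_real_derivative_iff_has_vector_derivative[THEN iffD1]] g'(2)
    by (intro fundamental_theorem_of_calculus_interior) auto
  then have "\<bar>h b - h a\<bar> = norm (integral {a..b} g')" by (simp add: integral_unique)
  also have "\<dots> \<le> integral {a..b} (\<lambda>t. \<bar>g' t\<bar>)"
    using cont cont_abs by (intro integral_norm_bound_integral integrable_continuous_real) auto
  also have "\<dots> = integral {a<..<b} (\<lambda>t. \<bar>g' t\<bar>)" by (rule integral_open_interval_real)
  also have "\<dots> = (LBINT t:{a<..<b}. \<bar>g' t\<bar>)"
  proof -
    have "set_integrable lborel {a..b} (\<lambda>t. \<bar>g' t\<bar>)"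
      unfolding set_integrable_def using cont_abs by (intro borel_integrable_compact) auto
    then have "set_integrable lborel {a<..<b} (\<lambda>t. \<bar>g' t\<bar>)"
      by (rule set_integrable_subset) auto
    then show ?thesis by (rule set_borel_integral_eq_integral(2)[symmetric])
  qed
  also have "\<dots> = (LBINT t:{a<..<b}. \<bar>g t\<bar>)"
    using g'(2) by (intro set_lebesgue_integral_cong) auto
  finally show ?thesis .
qed

definition edge_path :: "('v, 'e) mgraph \<Rightarrow> 'e \<Rightarrow> real \<Rightarrow> ('v, 'e) gpoint" where
  "edge_path G e s = (if s \<le> 0 then VertPt (src G e) else if len G e \<le> s then VertPt (tgt G e) else EdgePt e s)"

lemma gopen_EdgePt_open:
  "gopen G U \<Longrightarrow> e \<in> edges G \<Longrightarrow> open {t. 0 < t \<and> t < len G e \<and> EdgePt e t \<in> U}"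
  unfolding gopen_def by blast

lemma gopen_VertPt_nbhd:
  assumes "gopen G U" and "v \<in> verts G" and "VertPt v \<in> U"
  obtains \<epsilon> where "0 < \<epsilon>"
    and "\<And>e t. e \<in> edges G \<Longrightarrow> src G e = v \<Longrightarrow> 0 < t \<Longrightarrow> t < \<epsilon> \<Longrightarrow> t < len G e \<Longrightarrow> EdgePt e t \<in> U"
    and "\<And>e t. e \<in> edges G \<Longrightarrow> tgt G e = v \<Longrightarrow> 0 < t \<Longrightarrow> len G e - \<epsilon> < t \<Longrightarrow> t < len G e \<Longrightarrow> EdgePt e t \<in> U"
proof -
  have "\<exists>\<epsilon>>0. \<forall>e\<in>edges G.
      (src G e = v \<longrightarrow> (\<forall>t. 0 < t \<and> t < \<epsilon> \<and> t < len G e \<longrightarrow> EdgePt e t \<in> U)) \<and>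
      (tgt G e = v \<longrightarrow> (\<forall>t. 0 < t \<and> len G e - \<epsilon> < t \<and> t < len G e \<longrightarrow> EdgePt e t \<in> U))"
    using assms unfolding gopen_def by blast
  then show ?thesis using that by blast
qed

lemma gopen_edge_path_preimage:
  assumes "gopen G U" and "e \<in> edges G" and "src G e \<in> verts G" and "tgt G e \<in> verts G"
    and "0 < len G e"
  shows "openin (top_of_set {0..len G e}) ({0..len G e} \<inter> edge_path G e -` U)"
proof -
  define L where "L = len G e"
  define J where "J = {t. 0 < t \<and> t < L \<and> EdgePt e t \<in> U}"
  have "open J" using gopen_EdgePt_open[OF assms(1,2)] unfolding J_def L_def .
  obtain \<delta>0 where "0 < \<delta>0" and \<delta>0: "\<And>t. VertPt (src G e) \<in> U \<Longrightarrow> 0 < t \<Longrightarrow> t < \<delta>0 \<Longrightarrow> t < L \<Longrightarrow> EdgePt e t \<in> U"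
  proof (cases "VertPt (src G e) \<in> U")
    case True
    with gopen_VertPt_nbhd[OF assms(1,3) True] assms(2) that show ?thesis unfolding L_def by metis
  qed (use that[of 1] in simp)
  obtain \<delta>1 where "0 < \<delta>1" and \<delta>1: "\<And>t. VertPt (tgt G e) \<in> U \<Longrightarrow> 0 < t \<Longrightarrow> L - \<delta>1 < t \<Longrightarrow> t < L \<Longrightarrow> EdgePt e t \<in> U"
  proof (cases "VertPt (tgt G e) \<in> U")
    case True
    with gopen_VertPt_nbhd[OF assms(1,4) True] assms(2) that show ?thesis unfolding L_def by metis
  qed (use that[of 1] in simp)
  define T where "T = J \<union> (if VertPt (src G e) \<in> U then {..<min \<delta>0 L} else {})
    \<union> (if VertPt (tgt G e) \<in> U then {L - min \<delta>1 L<..} else {})"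
  have "open T" unfolding T_def using \<open>open J\<close> by (simp add: open_Un)
  have "edge_path G e s \<in> U \<longleftrightarrow> s \<in> T" if s: "s \<in> {0..L}" for s
  proof -
    consider "s = 0" | "s = L" | "0 < s" "s < L" using s by fastforce
    then show ?thesis
    proof cases
      case 1
      then show ?thesis using assms(5) \<open>0 < \<delta>0\<close> unfolding T_def J_def edge_path_def L_def by auto
    next
      case 2
      then show ?thesis using assms(5) \<open>0 < \<delta>1\<close> unfolding T_def J_def edge_path_def L_def by auto
    next
      case 3
      then show ?thesis using \<delta>0 \<delta>1 unfolding T_def J_def edge_path_def L_def by auto
    qed
  qed
  then have "{0..L} \<inter> edge_path G e -` U = {0..L} \<inter> T" by blast
  with \<open>open T\<close> show ?thesis unfolding openin_open L_def by blast
qed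

lemma gcontinuous_along_edge:
  assumes "closed_graph G" and "gcontinuous G f" and "e \<in> edges G"
  shows "continuous_on {0..len G e} (\<lambda>s. f (edge_path G e s))"
  unfolding continuous_openin_preimage_eq
proof (intro allI impI)
  fix T :: "real set" assume "open T"
  have ends: "src G e \<in> verts G" "tgt G e \<in> verts G" "0 < len G e"
    using assms(1,3) unfolding closed_graph_def by auto
  have "edge_path G e s \<in> gpoints G" if "s \<in> {0..len G e}" for s
    using that ends unfolding edge_path_def by (auto simp: assms(3))
  then have preimage: "{0..len G e} \<inter> (\<lambda>s. f (edge_path G e s)) -` T =
      {0..len G e} \<inter> edge_path G e -` {x \<in> gpoints G. f x \<in> T}" by auto
  have "gopen G {x \<in> gpoints G. f x \<in> T}" using assms(2) \<open>open T\<close> unfolding gcontinuous_def by blast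
  then show "openin (top_of_set {0..len G e}) ({0..len G e} \<inter> (\<lambda>s. f (edge_path G e s)) -` T)"
    unfolding preimage using assms(3) ends by (rule gopen_edge_path_preimage)
qed

lemma vertex_increment_le_edge_integral:
  assumes "closed_graph G" and "f \<in> C1Dir G" and "e \<in> edges G"
  shows "\<bar>f (VertPt (src G e)) - f (VertPt (tgt G e))\<bar> \<le>
    (LBINT t:{0<..<len G e}. \<bar>deriv (\<lambda>s. f (EdgePt e s)) t\<bar>)"
proof -
  have "0 < len G e" using assms(1,3) unfolding closed_graph_def by auto
  obtain g where g: "\<And>t. t \<in> {0<..<len G e} \<Longrightarrow> ((\<lambda>s. f (EdgePt e s)) has_real_derivative g t) (at t)"
    and "uniformly_continuous_on {0<..<len G e} g"
    using assms(2,3) unfolding C1Dir_def by blast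
  have "((\<lambda>s. f (edge_path G e s)) has_real_derivative g t) (at t)" if "t \<in> {0<..<len G e}" for t
    using g[OF that] that
    by (rule has_field_derivative_transform_within_open[OF _ open_greaterThanLessThan])
      (simp add: edge_path_def)
  then have "\<bar>f (edge_path G e (len G e)) - f (edge_path G e 0)\<bar> \<le> (LBINT t:{0<..<len G e}. \<bar>g t\<bar>)"
    using \<open>0 < len G e\<close> gcontinuous_along_edge[OF assms(1) _ assms(3)] assms(2)
      \<open>uniformly_continuous_on {0<..<len G e} g\<close>
    unfolding C1Dir_def by (intro abs_diff_le_integral_abs_derivative) auto
  also have "\<dots> = (LBINT t:{0<..<len G e}. \<bar>deriv (\<lambda>s. f (EdgePt e s)) t\<bar>)"
  proof (intro set_lebesgue_integral_cong allI impI)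
    fix t assume "t \<in> {0<..<len G e}"
    then show "\<bar>g t\<bar> = \<bar>deriv (\<lambda>s. f (EdgePt e s)) t\<bar>" using g DERIV_imp_deriv by metis
  qed simp
  finally show ?thesis
    using \<open>0 < len G e\<close> by (simp add: edge_path_def abs_minus_commute)
qed

lemma edge_variation_le_grad_norm1:
  assumes "closed_graph G" and "f \<in> C1Dir G"
  shows "edge_variation G (\<lambda>v. f (VertPt v)) \<le> grad_norm1 G f"
  unfolding edge_variation_def grad_norm1_def
  by (intro sum_mono mult_left_mono vertex_increment_le_edge_integral[OF assms])
    (use assms(1) in \<open>auto simp: closed_graph_def less_imp_le\<close>)

lemma gfrontier_subset_gpoints: "gfrontier G S \<subseteq> gpoints G"
  unfolding gfrontier_def gclosure_def by auto

lemma gclosureI: "x \<in> gpoints G \<Longrightarrow> (\<And>U. gopen G U \<Longrightarrow> x \<in> U \<Longrightarrow> U \<inter> S \<noteq> {}) \<Longrightarrow> x \<in> gclosure G S"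
  unfolding gclosure_def by simp

lemma gclosureD: "x \<in> gclosure G S \<Longrightarrow> gopen G U \<Longrightarrow> x \<in> U \<Longrightarrow> U \<inter> S \<noteq> {}"
  unfolding gclosure_def by simp

lemma gclosure_superset: "x \<in> S \<Longrightarrow> S \<subseteq> gpoints G \<Longrightarrow> x \<in> gclosure G S"
  unfolding gclosure_def by auto

lemma gclosure_mono: "S \<subseteq> T \<Longrightarrow> gclosure G S \<subseteq> gclosure G T"
  unfolding gclosure_def by blast

lemma gopen_level_sets:
  assumes "gcontinuous G f"
  shows "gopen G {x \<in> gpoints G. c < f x}" and "gopen G {x \<in> gpoints G. f x < c}"
proof -
  have "gopen G {x \<in> gpoints G. f x \<in> {c<..}}" and "gopen G {x \<in> gpoints G. f x \<in> {..<c}}"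
    by (rule assms[unfolded gcontinuous_def, rule_format], simp)+
  then show "gopen G {x \<in> gpoints G. c < f x}" and "gopen G {x \<in> gpoints G. f x < c}" by simp_all
qed

lemma gfrontier_superlevel_set:
  assumes "gcontinuous G f"
  shows "gfrontier G {x \<in> gpoints G. c < f x} \<subseteq> {x \<in> gpoints G. f x = c}"
proof
  fix x assume x: "x \<in> gfrontier G {x \<in> gpoints G. c < f x}"
  then have "x \<in> gpoints G" using gfrontier_subset_gpoints by blast
  have "\<not> f x < c"
    using x gclosureD[of x G _ "{x \<in> gpoints G. f x < c}"] gopen_level_sets(2)[OF assms] \<open>x \<in> gpoints G\<close>
    unfolding gfrontier_def by fastforce
  moreover have "\<not> c < f x"
    using x gclosureD[of x G _ "{x \<in> gpoints G. c < f x}"] gopen_level_sets(1)[OF assms] \<open>x \<in> gpoints G\<close>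
    unfolding gfrontier_def by fastforce
  ultimately show "x \<in> {x \<in> gpoints G. f x = c}" using \<open>x \<in> gpoints G\<close> by simp
qed

definition cut_set :: "('v, 'e) mgraph \<Rightarrow> 'v set \<Rightarrow> ('v, 'e) gpoint set" where
  "cut_set G B = {x \<in> gpoints G. 1 / 2 < linear_extension G (indicator B) x}"

lemma gopen_cut_set: "closed_graph G \<Longrightarrow> gopen G (cut_set G B)"
  unfolding cut_set_def by (rule gopen_level_sets(1)[OF linear_extension_gcontinuous])

lemma vertices_of_cut_set: "B \<subseteq> verts G \<Longrightarrow> {v \<in> verts G. VertPt v \<in> cut_set G B} = B"
  unfolding cut_set_def by (auto simp: indicator_def)

lemma gfrontier_cut_set:
  assumes "closed_graph G"
  shows "gfrontier G (cut_set G B) \<subseteq>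
    (\<lambda>e. EdgePt e (len G e / 2)) ` {e \<in> edges G. (src G e \<in> B) \<noteq> (tgt G e \<in> B)}"
proof
  fix x assume "x \<in> gfrontier G (cut_set G B)"
  moreover have "gfrontier G (cut_set G B) \<subseteq> {x \<in> gpoints G. linear_extension G (indicator B) x = 1 / 2}"
    unfolding cut_set_def by (rule gfrontier_superlevel_set[OF linear_extension_gcontinuous[OF assms]])
  ultimately have x: "x \<in> gpoints G" "linear_extension G (indicator B) x = 1 / 2" by auto
  show "x \<in> (\<lambda>e. EdgePt e (len G e / 2)) ` {e \<in> edges G. (src G e \<in> B) \<noteq> (tgt G e \<in> B)}"
  proof (cases x)
    case (VertPt v)
    then show ?thesis using x by (cases "v \<in> B") auto
  next
    case (EdgePt e t)
    then have e: "e \<in> edges G" "0 < t" "t < len G e" using x by auto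
    then have "0 < len G e" by simp
    have val: "indicator B (src G e) + (indicator B (tgt G e) - indicator B (src G e)) * t / len G e = (1 / 2 :: real)"
      using x(2) unfolding EdgePt by simp
    have cut: "(src G e \<in> B) \<noteq> (tgt G e \<in> B)"
      using val by (cases "src G e \<in> B"; cases "tgt G e \<in> B") simp_all
    then have "t / len G e = 1 / 2"
      using val by (cases "src G e \<in> B") (simp_all add: diff_divide_distrib)
    then have "t = len G e / 2" using \<open>0 < len G e\<close> by (simp add: field_simps)
    then show ?thesis using EdgePt e cut by auto
  qed
qed

lemma cut_set_admissible_area:
  assumes "closed_graph G"
  shows "admissible G (cut_set G B)" and "area G (cut_set G B) \<le> edge_variation G (indicator B)"
proof -
  define C where "C = {e \<in> edges G. (src G e \<in> B) \<noteq> (tgt G e \<in> B)}"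
  define mid where "mid e = (EdgePt e (len G e / 2) :: ('a, 'b) gpoint)" for e
  have "finite (edges G)" and wt: "\<And>e. e \<in> edges G \<Longrightarrow> 0 \<le> wt G e"
    using assms unfolding closed_graph_def by (auto simp: less_imp_le)
  then have "finite C" unfolding C_def by simp
  have Fr: "gfrontier G (cut_set G B) \<subseteq> mid ` C"
    using gfrontier_cut_set[OF assms] unfolding C_def mid_def .
  then show "admissible G (cut_set G B)"
    using gopen_cut_set[OF assms] \<open>finite C\<close> assms
    unfolding admissible_def closed_graph_def by (auto intro: finite_subset)
  have "{v. VertPt v \<in> gfrontier G (cut_set G B)} = {}" using Fr unfolding mid_def by auto
  then have "area G (cut_set G B) = (\<Sum>x\<in>gfrontier G (cut_set G B) - range VertPt. wt G (point_edge x))"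
    unfolding area_def by simp
  also have "\<dots> \<le> (\<Sum>x\<in>mid ` C. wt G (point_edge x))"
    using Fr \<open>finite C\<close> wt unfolding C_def mid_def by (intro sum_mono2) auto
  also have "\<dots> = sum (wt G) C"
    by (subst sum.reindex) (auto simp: inj_on_def mid_def)
  also have "\<dots> = edge_variation G (indicator B)"
    unfolding C_def by (rule edge_variation_indicator[OF \<open>finite (edges G)\<close>, symmetric])
  finally show "area G (cut_set G B) \<le> edge_variation G (indicator B)" .
qed

lemma gopen_meets_incident_edge:
  assumes "gopen G U" and "v \<in> verts G" and "VertPt v \<in> U" and "e \<in> edges G"
    and "v = src G e \<or> v = tgt G e" and "0 < len G e"
  obtains t where "0 < t" and "t < len G e" and "EdgePt e t \<in> U"
proof -
  obtain \<epsilon> where "0 < \<epsilon>"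
    and src: "\<And>t. src G e = v \<Longrightarrow> 0 < t \<Longrightarrow> t < \<epsilon> \<Longrightarrow> t < len G e \<Longrightarrow> EdgePt e t \<in> U"
    and tgt: "\<And>t. tgt G e = v \<Longrightarrow> 0 < t \<Longrightarrow> len G e - \<epsilon> < t \<Longrightarrow> t < len G e \<Longrightarrow> EdgePt e t \<in> U"
    using gopen_VertPt_nbhd[OF assms(1-3)] assms(4) by metis
  define d where "d = min \<epsilon> (len G e) / 2"
  have d: "0 < d" "d < \<epsilon>" "d < len G e" unfolding d_def using \<open>0 < \<epsilon>\<close> assms(6) by auto
  from assms(5) show ?thesis
  proof
    assume "v = src G e"
    then show ?thesis using that[of d] src[of d] d by simp
  next
    assume "v = tgt G e"
    then show ?thesis using that[of "len G e - d"] tgt[of "len G e - d"] d by simp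
  qed
qed

lemma edge_inside_without_frontier:
  assumes "gopen G \<Omega>" and "e \<in> edges G" and "0 < len G e"
    and "u = src G e \<or> u = tgt G e" and "u \<in> verts G" and "VertPt u \<in> \<Omega>"
    and no_frontier: "\<And>t. EdgePt e t \<notin> gfrontier G \<Omega>"
    and "0 < t" and "t < len G e"
  shows "EdgePt e t \<in> \<Omega>"
proof -
  define L where "L = len G e"
  define J where "J = {t. 0 < t \<and> t < L \<and> EdgePt e t \<in> \<Omega>}"
  define K where "K = (\<Union>U\<in>{U. gopen G U \<and> U \<inter> \<Omega> = {}}. {t. 0 < t \<and> t < L \<and> EdgePt e t \<in> U})"
  have "open J" using gopen_EdgePt_open[OF assms(1,2)] unfolding J_def L_def .
  moreover have "open K" unfolding K_def L_def using assms(2) by (auto intro!: open_UN gopen_EdgePt_open)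
  moreover have "J \<inter> K \<inter> {0<..<L} = {}" unfolding J_def K_def by blast
  moreover have "{0<..<L} \<subseteq> J \<union> K"
  proof
    fix s assume s: "s \<in> {0<..<L}"
    show "s \<in> J \<union> K"
    proof (cases "EdgePt e s \<in> \<Omega>")
      case False
      then have "EdgePt e s \<in> gclosure G (gpoints G - \<Omega>)"
        using s assms(2) unfolding L_def by (intro gclosure_superset) auto
      then have "EdgePt e s \<notin> gclosure G \<Omega>" using no_frontier unfolding gfrontier_def by blast
      then obtain U where "gopen G U" "EdgePt e s \<in> U" "U \<inter> \<Omega> = {}"
        using s assms(2) unfolding gclosure_def L_def by auto
      then show ?thesis using s unfolding K_def by auto
    qed (use s in \<open>simp add: J_def\<close>)
  qed
  moreover obtain t0 where "0 < t0" "t0 < L" "EdgePt e t0 \<in> \<Omega>"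
    using gopen_meets_incident_edge[OF assms(1,5,6,2,4,3)] unfolding L_def by blast
  then have "J \<inter> {0<..<L} \<noteq> {}" unfolding J_def by auto
  ultimately have "K \<inter> {0<..<L} = {}" using connectedD[OF connected_Ioo] by metis
  moreover have "t \<in> {0<..<L}" using assms(8,9) unfolding L_def by simp
  ultimately have "t \<in> J" using \<open>{0<..<L} \<subseteq> J \<union> K\<close> by blast
  then show ?thesis unfolding J_def by simp
qed

lemma cut_edge_frontier_witness:
  assumes "closed_graph G" and "gopen G \<Omega>" and "e \<in> edges G"
    and ends: "(u = src G e \<and> w = tgt G e) \<or> (u = tgt G e \<and> w = src G e)"
    and "VertPt u \<in> \<Omega>" and "VertPt w \<notin> \<Omega>"
  shows "(\<exists>t. EdgePt e t \<in> gfrontier G \<Omega>) \<or>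
    (VertPt w \<in> gfrontier G \<Omega> \<and> VertPt w \<in> gclosure G (\<Omega> \<inter> edge_interior G e))"
proof (cases "\<exists>t. EdgePt e t \<in> gfrontier G \<Omega>")
  case no_frontier: False
  have "src G e \<in> verts G" "tgt G e \<in> verts G" "0 < len G e"
    using assms(1,3) unfolding closed_graph_def by auto
  then have "u \<in> verts G" "w \<in> verts G" using ends by auto
  have inside: "EdgePt e t \<in> \<Omega>" if "0 < t" "t < len G e" for t
    using edge_inside_without_frontier[OF assms(2,3) \<open>0 < len G e\<close> _ \<open>u \<in> verts G\<close> assms(5)] no_frontier that ends
    by blast
  have closure: "VertPt w \<in> gclosure G (\<Omega> \<inter> edge_interior G e)"
  proof (rule gclosureI)
    show "VertPt w \<in> gpoints G" using \<open>w \<in> verts G\<close> by simp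
    fix U assume "gopen G U" "VertPt w \<in> U"
    then obtain t where "0 < t" "t < len G e" "EdgePt e t \<in> U"
      using gopen_meets_incident_edge[OF _ \<open>w \<in> verts G\<close> _ assms(3) _ \<open>0 < len G e\<close>] ends by metis
    then show "U \<inter> (\<Omega> \<inter> edge_interior G e) \<noteq> {}"
      using inside unfolding edge_interior_def by blast
  qed
  moreover have "VertPt w \<in> gclosure G (gpoints G - \<Omega>)"
    using \<open>w \<in> verts G\<close> assms(6) by (intro gclosure_superset) auto
  ultimately show ?thesis
    using gclosure_mono[of "\<Omega> \<inter> edge_interior G e" \<Omega> G] unfolding gfrontier_def by blast
qed simp

lemma edge_variation_le_area:
  assumes "closed_graph G" and "admissible G \<Omega>"
  shows "edge_variation G (indicator {v \<in> verts G. VertPt v \<in> \<Omega>}) \<le> area G \<Omega>"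
proof -
  define B where "B = {v \<in> verts G. VertPt v \<in> \<Omega>}"
  define Fr where "Fr = gfrontier G \<Omega>"
  define Vf where "Vf = {v. VertPt v \<in> Fr}"
  define Ev where "Ev v = {e \<in> edges G. VertPt v \<in> gclosure G (\<Omega> \<inter> edge_interior G e)}" for v
  define E1 where "E1 = point_edge ` (Fr - range VertPt)"
  define E2 where "E2 = snd ` Sigma Vf Ev"
  have fin: "finite (edges G)" "finite Fr" and "gopen G \<Omega>"
    using assms unfolding closed_graph_def admissible_def Fr_def by auto
  have wt: "0 \<le> wt G e" if "e \<in> edges G" for e
    using assms(1) that unfolding closed_graph_def by (simp add: less_imp_le)
  have "finite (VertPt -` Fr)" using fin(2) by (rule finite_vimageI) (simp add: inj_def)
  then have "finite Vf" unfolding Vf_def vimage_def .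
  then have "finite (Sigma Vf Ev)" unfolding Ev_def using fin(1) by auto
  have E1_edges: "E1 \<subseteq> edges G"
  proof
    fix e assume "e \<in> E1"
    then obtain x where "x \<in> Fr" "x \<notin> range VertPt" "e = point_edge x" unfolding E1_def by auto
    moreover have "x \<in> gpoints G" using \<open>x \<in> Fr\<close> gfrontier_subset_gpoints unfolding Fr_def by blast
    ultimately show "e \<in> edges G" by (cases x) auto
  qed
  have E2_edges: "E2 \<subseteq> edges G" unfolding E2_def Ev_def by auto
  have cut_edges: "{e \<in> edges G. (src G e \<in> B) \<noteq> (tgt G e \<in> B)} \<subseteq> E1 \<union> E2"
  proof
    fix e assume "e \<in> {e \<in> edges G. (src G e \<in> B) \<noteq> (tgt G e \<in> B)}"
    then have e: "e \<in> edges G" and cut: "(src G e \<in> B) \<noteq> (tgt G e \<in> B)" by auto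
    have "src G e \<in> verts G" "tgt G e \<in> verts G" using assms(1) e unfolding closed_graph_def by auto
    then obtain u w where ends: "(u = src G e \<and> w = tgt G e) \<or> (u = tgt G e \<and> w = src G e)"
      and uw: "VertPt u \<in> \<Omega>" "VertPt w \<notin> \<Omega>"
      using cut unfolding B_def by auto
    from cut_edge_frontier_witness[OF assms(1) \<open>gopen G \<Omega>\<close> e ends uw]
    show "e \<in> E1 \<union> E2"
    proof (elim disjE)
      assume "\<exists>t. EdgePt e t \<in> gfrontier G \<Omega>"
      then obtain t where "EdgePt e t \<in> Fr" unfolding Fr_def by blast
      then have "e \<in> E1" unfolding E1_def by (intro image_eqI[where x = "EdgePt e t"]) auto
      then show ?thesis by simp
    next
      assume "VertPt w \<in> gfrontier G \<Omega> \<and> VertPt w \<in> gclosure G (\<Omega> \<inter> edge_interior G e)"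
      then have "(w, e) \<in> Sigma Vf Ev" unfolding Vf_def Ev_def Fr_def using e by simp
      then have "e \<in> E2" unfolding E2_def by (intro image_eqI[where x = "(w, e)"]) auto
      then show ?thesis by simp
    qed
  qed
  have "edge_variation G (indicator B) = sum (wt G) {e \<in> edges G. (src G e \<in> B) \<noteq> (tgt G e \<in> B)}"
    by (rule edge_variation_indicator[OF fin(1)])
  also have "\<dots> \<le> sum (wt G) (E1 \<union> E2)"
    using cut_edges E1_edges E2_edges fin(1) wt by (intro sum_mono2) (auto intro: finite_subset)
  also have "\<dots> \<le> sum (wt G) E1 + sum (wt G) E2"
  proof -
    have "finite E1" "finite E2" using E1_edges E2_edges fin(1) by (auto intro: finite_subset)
    then have "sum (wt G) (E1 \<union> E2) + sum (wt G) (E1 \<inter> E2) = sum (wt G) E1 + sum (wt G) E2"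
      by (rule sum.union_inter)
    moreover have "0 \<le> sum (wt G) (E1 \<inter> E2)" using E1_edges wt by (intro sum_nonneg) auto
    ultimately show ?thesis by linarith
  qed
  also have "sum (wt G) E1 \<le> sum (wt G \<circ> point_edge) (Fr - range VertPt)"
    unfolding E1_def by (rule sum_image_le) (use fin(2) E1_edges wt in \<open>auto simp: E1_def\<close>)
  also have "sum (wt G) E2 \<le> sum (wt G \<circ> snd) (Sigma Vf Ev)"
    unfolding E2_def by (rule sum_image_le) (use \<open>finite (Sigma Vf Ev)\<close> wt in \<open>auto simp: Ev_def\<close>)
  also have "\<dots> = (\<Sum>v\<in>Vf. \<Sum>e\<in>Ev v. wt G e)"
    using \<open>finite Vf\<close> fin(1) unfolding Ev_def by (subst sum.Sigma) (auto simp: case_prod_unfold)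
  finally show ?thesis unfolding area_def B_def Fr_def Vf_def Ev_def by simp
qed

definition vertex_cuts :: "('v, 'e) mgraph \<Rightarrow> 'v set set" where
  "vertex_cuts G = {B. B \<subset> verts G \<and> B \<noteq> {}}"

lemma vmeasure_complement:
  "vmeasure G (gpoints G - \<Omega>) = sum (vmeas G) (verts G - {v \<in> verts G. VertPt v \<in> \<Omega>})"
  unfolding vmeasure_def by (rule sum.cong) auto

lemma sum_pos_on_cut:
  assumes "closed_graph G" and "B \<subseteq> verts G" and "B \<noteq> {}"
  shows "0 < sum (vmeas G) B"
  using assms unfolding closed_graph_def by (intro sum_pos) (auto intro: finite_subset)

lemma isoperimetric_INF_eq_INF_vertex_cuts:
  fixes h :: "real \<Rightarrow> real \<Rightarrow> real"
  assumes "closed_graph G" and h_nonneg: "\<And>x y. 0 < x \<Longrightarrow> 0 < y \<Longrightarrow> 0 \<le> h x y"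
  shows "(INF \<Omega>\<in>{\<Omega>. admissible G \<Omega> \<and> 0 < vmeasure G \<Omega> \<and> 0 < vmeasure G (gpoints G - \<Omega>)}.
           ereal (area G \<Omega> * h (vmeasure G \<Omega>) (vmeasure G (gpoints G - \<Omega>)))) =
    (INF B\<in>vertex_cuts G. ereal (edge_variation G (indicator B) * h (sum (vmeas G) B) (sum (vmeas G) (verts G - B))))"
proof (rule antisym)
  show "(INF \<Omega>\<in>{\<Omega>. admissible G \<Omega> \<and> 0 < vmeasure G \<Omega> \<and> 0 < vmeasure G (gpoints G - \<Omega>)}.
           ereal (area G \<Omega> * h (vmeasure G \<Omega>) (vmeasure G (gpoints G - \<Omega>)))) \<le>
    (INF B\<in>vertex_cuts G. ereal (edge_variation G (indicator B) * h (sum (vmeas G) B) (sum (vmeas G) (verts G - B))))"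
  proof (rule INF_greatest)
    fix B assume "B \<in> vertex_cuts G"
    then have B: "B \<subseteq> verts G" "B \<noteq> {}" "verts G - B \<noteq> {}" unfolding vertex_cuts_def by auto
    have measures: "vmeasure G (cut_set G B) = sum (vmeas G) B"
      "vmeasure G (gpoints G - cut_set G B) = sum (vmeas G) (verts G - B)"
      unfolding vmeasure_complement vertices_of_cut_set[OF B(1)] by (simp_all add: vmeasure_def vertices_of_cut_set[OF B(1)])
    have pos: "0 < sum (vmeas G) B" "0 < sum (vmeas G) (verts G - B)"
      using sum_pos_on_cut[OF assms(1)] B by auto
    then have "cut_set G B \<in> {\<Omega>. admissible G \<Omega> \<and> 0 < vmeasure G \<Omega> \<and> 0 < vmeasure G (gpoints G - \<Omega>)}"
      using cut_set_admissible_area(1)[OF assms(1)] measures by simp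
    moreover have "area G (cut_set G B) * h (sum (vmeas G) B) (sum (vmeas G) (verts G - B)) \<le>
        edge_variation G (indicator B) * h (sum (vmeas G) B) (sum (vmeas G) (verts G - B))"
      using cut_set_admissible_area(2)[OF assms(1)] h_nonneg[OF pos] by (rule mult_right_mono)
    ultimately show "(INF \<Omega>\<in>{\<Omega>. admissible G \<Omega> \<and> 0 < vmeasure G \<Omega> \<and> 0 < vmeasure G (gpoints G - \<Omega>)}.
           ereal (area G \<Omega> * h (vmeasure G \<Omega>) (vmeasure G (gpoints G - \<Omega>)))) \<le>
        ereal (edge_variation G (indicator B) * h (sum (vmeas G) B) (sum (vmeas G) (verts G - B)))"
      using measures by (intro INF_lower2) auto
  qed
next
  show "(INF B\<in>vertex_cuts G. ereal (edge_variation G (indicator B) * h (sum (vmeas G) B) (sum (vmeas G) (verts G - B)))) \<le>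
    (INF \<Omega>\<in>{\<Omega>. admissible G \<Omega> \<and> 0 < vmeasure G \<Omega> \<and> 0 < vmeasure G (gpoints G - \<Omega>)}.
           ereal (area G \<Omega> * h (vmeasure G \<Omega>) (vmeasure G (gpoints G - \<Omega>))))"
  proof (rule INF_greatest)
    fix \<Omega> assume "\<Omega> \<in> {\<Omega>. admissible G \<Omega> \<and> 0 < vmeasure G \<Omega> \<and> 0 < vmeasure G (gpoints G - \<Omega>)}"
    then have \<Omega>: "admissible G \<Omega>" "0 < vmeasure G \<Omega>" "0 < vmeasure G (gpoints G - \<Omega>)" by auto
    define B where "B = {v \<in> verts G. VertPt v \<in> \<Omega>}"
    have measures: "vmeasure G \<Omega> = sum (vmeas G) B" "vmeasure G (gpoints G - \<Omega>) = sum (vmeas G) (verts G - B)"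
      unfolding B_def vmeasure_complement by (simp_all add: vmeasure_def)
    have "B \<noteq> {}" and "verts G - B \<noteq> {}"
      using \<Omega>(2,3) unfolding measures by (metis less_irrefl sum.empty)+
    then have "B \<in> vertex_cuts G" unfolding vertex_cuts_def B_def by blast
    moreover have "edge_variation G (indicator B) * h (sum (vmeas G) B) (sum (vmeas G) (verts G - B)) \<le>
        area G \<Omega> * h (sum (vmeas G) B) (sum (vmeas G) (verts G - B))"
      using edge_variation_le_area[OF assms(1) \<Omega>(1)] h_nonneg \<Omega>(2,3)
      unfolding B_def[symmetric] measures by (intro mult_right_mono) auto
    ultimately show "(INF B\<in>vertex_cuts G. ereal (edge_variation G (indicator B) * h (sum (vmeas G) B) (sum (vmeas G) (verts G - B)))) \<le>
        ereal (area G \<Omega> * h (vmeasure G \<Omega>) (vmeasure G (gpoints G - \<Omega>)))"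
      unfolding measures by (intro INF_lower2) auto
  qed
qed

lemma Itilde'_eq_INF_vertex_cuts:
  assumes "closed_graph G" and "1 \<le> \<nu>"
  shows "Itilde' G \<nu> = (INF B\<in>vertex_cuts G. ereal (edge_variation G (indicator B) *
    Itilde'_weight \<nu> (sum (vmeas G) B) (sum (vmeas G) (verts G - B))))"
  unfolding Itilde'_def Itilde'_weight_def[symmetric]
  using assms by (intro isoperimetric_INF_eq_INF_vertex_cuts) (auto intro: less_imp_le Itilde'_weight_pos)

lemma Itilde_eq_INF_vertex_cuts:
  assumes "closed_graph G"
  shows "Itilde G \<nu> = (INF B\<in>vertex_cuts G. ereal (edge_variation G (indicator B) *
    min (sum (vmeas G) B) (sum (vmeas G) (verts G - B)) powr (inv_exp \<nu> - 1)))"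
  unfolding Itilde_def using assms by (intro isoperimetric_INF_eq_INF_vertex_cuts) auto

definition lq_dist_const :: "'v set \<Rightarrow> ('v \<Rightarrow> real) \<Rightarrow> ereal \<Rightarrow> ('v \<Rightarrow> real) \<Rightarrow> real" where
  "lq_dist_const V m q \<phi> = (INF a. lq_norm V m q (\<lambda>v. \<phi> v - a))"

lemma lq_dist_const_le: "finite V \<Longrightarrow> lq_dist_const V m q \<phi> \<le> lq_norm V m q (\<lambda>v. \<phi> v - a)"
  unfolding lq_dist_const_def by (rule cINF_lower) (auto intro: bdd_belowI2 lq_norm_nonneg)

definition split_on :: "'v set \<Rightarrow> ('v \<Rightarrow> real) \<Rightarrow> ('v \<Rightarrow> real) \<Rightarrow> bool" where
  "split_on V m \<phi> \<longleftrightarrow> sum m {v \<in> V. 0 < \<phi> v} \<le> sum m V / 2 \<and> sum m {v \<in> V. \<phi> v < 0} \<le> sum m V / 2"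

lemma split_fun_iff_split_on: "split_fun G f \<longleftrightarrow> split_on (verts G) (vmeas G) (\<lambda>v. f (VertPt v))"
  unfolding split_fun_def split_on_def vmeasure_def by simp

lemma INF_C1Dir_eq_INF_vertex_functions:
  assumes "closed_graph G" and "\<And>\<phi>. P \<phi> \<Longrightarrow> 0 < Q \<phi>"
  shows "(INF f\<in>{f \<in> C1Dir G. P (\<lambda>v. f (VertPt v))}. ereal (grad_norm1 G f / Q (\<lambda>v. f (VertPt v)))) =
    (INF \<phi>\<in>{\<phi>. P \<phi>}. ereal (edge_variation G \<phi> / Q \<phi>))"
proof (rule antisym)
  show "(INF f\<in>{f \<in> C1Dir G. P (\<lambda>v. f (VertPt v))}. ereal (grad_norm1 G f / Q (\<lambda>v. f (VertPt v))))
      \<le> (INF \<phi>\<in>{\<phi>. P \<phi>}. ereal (edge_variation G \<phi> / Q \<phi>))"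
  proof (rule INF_greatest)
    fix \<phi> assume "\<phi> \<in> {\<phi>. P \<phi>}"
    moreover have "(\<lambda>v. linear_extension G \<phi> (VertPt v)) = \<phi>" by simp
    ultimately show "(INF f\<in>{f \<in> C1Dir G. P (\<lambda>v. f (VertPt v))}. ereal (grad_norm1 G f / Q (\<lambda>v. f (VertPt v))))
        \<le> ereal (edge_variation G \<phi> / Q \<phi>)"
      using linear_extension_C1Dir[OF assms(1)] grad_norm1_linear_extension[OF assms(1)]
      by (intro INF_lower2[where i = "linear_extension G \<phi>"]) auto
  qed
  show "(INF \<phi>\<in>{\<phi>. P \<phi>}. ereal (edge_variation G \<phi> / Q \<phi>))
      \<le> (INF f\<in>{f \<in> C1Dir G. P (\<lambda>v. f (VertPt v))}. ereal (grad_norm1 G f / Q (\<lambda>v. f (VertPt v))))"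
  proof (rule INF_greatest)
    fix f assume f: "f \<in> {f \<in> C1Dir G. P (\<lambda>v. f (VertPt v))}"
    then have "edge_variation G (\<lambda>v. f (VertPt v)) / Q (\<lambda>v. f (VertPt v)) \<le> grad_norm1 G f / Q (\<lambda>v. f (VertPt v))"
      using edge_variation_le_grad_norm1[OF assms(1)] assms(2) by (intro divide_right_mono) (auto intro: less_imp_le)
    with f show "(INF \<phi>\<in>{\<phi>. P \<phi>}. ereal (edge_variation G \<phi> / Q \<phi>))
        \<le> ereal (grad_norm1 G f / Q (\<lambda>v. f (VertPt v)))"
      by (intro INF_lower2[where i = "\<lambda>v. f (VertPt v)"]) auto
  qed
qed

lemma Stilde_eq_INF_vertex_functions:
  assumes "closed_graph G"
  shows "Stilde G \<nu> = (INF \<phi>\<in>{\<phi>. 0 < lq_dist_const (verts G) (vmeas G) (dual_exp \<nu>) \<phi>}.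
    ereal (edge_variation G \<phi> / lq_dist_const (verts G) (vmeas G) (dual_exp \<nu>) \<phi>))"
  unfolding Stilde_def vnorm_eq_lq_norm lq_dist_const_def[symmetric]
  using assms by (rule INF_C1Dir_eq_INF_vertex_functions)

lemma Stilde_split_eq_INF_vertex_functions:
  assumes "closed_graph G"
  shows "Stilde_split G \<nu> = (INF \<phi>\<in>{\<phi>. split_on (verts G) (vmeas G) \<phi> \<and> 0 < lq_norm (verts G) (vmeas G) (dual_exp \<nu>) \<phi>}.
    ereal (edge_variation G \<phi> / lq_norm (verts G) (vmeas G) (dual_exp \<nu>) \<phi>))"
  unfolding Stilde_split_def vnorm_eq_lq_norm split_fun_iff_split_on
  using assms by (rule INF_C1Dir_eq_INF_vertex_functions) simp

lemma INF_ereal_le_by_real_bound: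
  assumes "a \<in> A" and "\<And>x. x \<in> A \<Longrightarrow> 0 \<le> f x"
    and "\<And>\<kappa>. 0 \<le> \<kappa> \<Longrightarrow> (\<And>x. x \<in> A \<Longrightarrow> \<kappa> \<le> f x) \<Longrightarrow> \<kappa> \<le> g"
  shows "(INF x\<in>A. ereal (f x)) \<le> ereal g"
proof -
  have "(INF x\<in>A. ereal (f x)) \<le> ereal (f a)" using assms(1) by (rule INF_lower)
  moreover have "0 \<le> (INF x\<in>A. ereal (f x))" using assms(2) by (intro INF_greatest) simp
  ultimately obtain \<kappa> where \<kappa>: "(INF x\<in>A. ereal (f x)) = ereal \<kappa>"
    by (cases "INF x\<in>A. ereal (f x)") auto
  have "0 \<le> \<kappa>" using \<open>0 \<le> (INF x\<in>A. ereal (f x))\<close> unfolding \<kappa> by simp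
  moreover have "\<kappa> \<le> f x" if "x \<in> A" for x
    using INF_lower[OF that, of "\<lambda>x. ereal (f x)"] unfolding \<kappa> by simp
  ultimately show ?thesis unfolding \<kappa> using assms(3) by simp
qed

lemma edge_variation_nonneg_closed: "closed_graph G \<Longrightarrow> 0 \<le> edge_variation G \<phi>"
  by (rule edge_variation_nonneg) (simp add: closed_graph_def less_imp_le)

lemma edge_variation_indicator_complement:
  assumes "closed_graph G"
  shows "edge_variation G (indicator (verts G - B)) = edge_variation G (indicator B)"
proof -
  have "edge_variation G (indicator (verts G - B)) = edge_variation G (\<lambda>v. (-1) * indicator B v + 1)"
    using assms unfolding closed_graph_def by (intro edge_variation_cong) (auto simp: indicator_def)
  then show ?thesis by (simp only: edge_variation_affine abs_neg_one mult_1)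
qed

lemma lq_norm_eq_0:
  assumes "finite V" and "1 \<le> q" and "\<And>v. v \<in> V \<Longrightarrow> \<phi> v = 0"
  shows "lq_norm V m q \<phi> = 0"
proof -
  have "lq_norm V m q \<phi> = lq_norm V m q (\<lambda>v. 0 * \<phi> v)" using assms(3) by (intro lq_norm_cong) simp
  then show ?thesis using lq_norm_scale[OF assms(1,2), where c = 0] by simp
qed

lemma nonconstant_if_lq_dist_const_pos:
  assumes "finite V" and "1 \<le> q" and "0 < lq_dist_const V m q \<phi>"
  shows "\<exists>u\<in>V. \<exists>w\<in>V. \<phi> u \<noteq> \<phi> w"
proof (rule ccontr)
  assume const: "\<not> ?thesis"
  have all_eq: "\<phi> u = \<phi> w" if "u \<in> V" "w \<in> V" for u w using const that by blast
  define a where "a = \<phi> (SOME u. u \<in> V)"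
  have "\<phi> v - a = 0" if "v \<in> V" for v
    unfolding a_def using all_eq[OF that someI[of "\<lambda>u. u \<in> V" v, OF that]] by simp
  then have "lq_norm V m q (\<lambda>v. \<phi> v - a) = 0" by (rule lq_norm_eq_0[OF assms(1,2)])
  then show False using lq_dist_const_le[OF assms(1), of m q \<phi> a] assms(3) by simp
qed

lemma vertex_cut_of_nonconstant:
  assumes "u \<in> verts G" and "w \<in> verts G" and "\<phi> u \<noteq> \<phi> w"
  shows "{v \<in> verts G. \<phi> v = \<phi> u} \<in> vertex_cuts G"
proof -
  have "w \<notin> {v \<in> verts G. \<phi> v = \<phi> u}" using assms(3) by simp
  then show ?thesis using assms(1,2) unfolding vertex_cuts_def by blast
qed

lemma shifted_indicator_of_vertex_cut:
  assumes "closed_graph G" and "1 \<le> \<nu>" and "B \<in> vertex_cuts G"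
  defines "W \<equiv> Itilde'_weight \<nu> (sum (vmeas G) B) (sum (vmeas G) (verts G - B))"
  shows "0 < W"
    and "\<exists>b. lq_norm (verts G) (vmeas G) (dual_exp \<nu>) (\<lambda>v. indicator B v - b) = 1 / W"
    and "lq_dist_const (verts G) (vmeas G) (dual_exp \<nu>) (indicator B) = 1 / W"
proof -
  have B: "B \<subseteq> verts G" "B \<noteq> {}" "verts G - B \<noteq> {}" using assms(3) unfolding vertex_cuts_def by auto
  have "finite (verts G)" and vmeas: "\<And>v. v \<in> verts G \<Longrightarrow> 0 < vmeas G v"
    using assms(1) unfolding closed_graph_def by auto
  note min = shifted_indicator_norm_min[where m = "vmeas G", OF assms(2) \<open>finite (verts G)\<close> vmeas B, folded W_def]
  show "0 < W" unfolding W_def using assms(1) B by (intro Itilde'_weight_pos assms(2) sum_pos_on_cut) auto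
  show "\<exists>b. lq_norm (verts G) (vmeas G) (dual_exp \<nu>) (\<lambda>v. indicator B v - b) = 1 / W" by (rule min(2))
  then obtain b where b: "lq_norm (verts G) (vmeas G) (dual_exp \<nu>) (\<lambda>v. indicator B v - b) = 1 / W" ..
  show "lq_dist_const (verts G) (vmeas G) (dual_exp \<nu>) (indicator B) = 1 / W"
    unfolding lq_dist_const_def
  proof (rule cInf_eq_minimum)
    show "1 / W \<in> range (\<lambda>a. lq_norm (verts G) (vmeas G) (dual_exp \<nu>) (\<lambda>v. indicator B v - a))"
      using b by (intro image_eqI[where x = b]) simp_all
  qed (use min(1) in auto)
qed

theorem INF_vertex_cuts_eq_INF_shifted_quotients:
  assumes "closed_graph G" and "1 \<le> \<nu>"
  defines "D \<equiv> lq_dist_const (verts G) (vmeas G) (dual_exp \<nu>)"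
    and "W \<equiv> \<lambda>B. Itilde'_weight \<nu> (sum (vmeas G) B) (sum (vmeas G) (verts G - B))"
  shows "(INF B\<in>vertex_cuts G. ereal (edge_variation G (indicator B) * W B)) =
    (INF \<phi>\<in>{\<phi>. 0 < D \<phi>}. ereal (edge_variation G \<phi> / D \<phi>))"
proof (rule antisym)
  define N where "N = lq_norm (verts G) (vmeas G) (dual_exp \<nu>)"
  interpret graph_seminorm G N
    unfolding N_def using assms(1) one_le_dual_exp[OF assms(2)] by (rule graph_seminorm_lq_norm)
  note cut = shifted_indicator_of_vertex_cut[OF assms(1,2), folded N_def D_def]
  show "(INF B\<in>vertex_cuts G. ereal (edge_variation G (indicator B) * W B)) \<le>
      (INF \<phi>\<in>{\<phi>. 0 < D \<phi>}. ereal (edge_variation G \<phi> / D \<phi>))"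
  proof (rule INF_greatest)
    fix \<phi> assume "\<phi> \<in> {\<phi>. 0 < D \<phi>}"
    then have "0 < D \<phi>" by simp
    then obtain u w where "u \<in> verts G" "w \<in> verts G" "\<phi> u \<noteq> \<phi> w"
      unfolding D_def using nonconstant_if_lq_dist_const_pos[OF finite_verts one_le_dual_exp[OF assms(2)]] by blast
    then have cut0: "{v \<in> verts G. \<phi> v = \<phi> u} \<in> vertex_cuts G" by (rule vertex_cut_of_nonconstant)
    show "(INF B\<in>vertex_cuts G. ereal (edge_variation G (indicator B) * W B)) \<le> ereal (edge_variation G \<phi> / D \<phi>)"
    proof (rule INF_ereal_le_by_real_bound[OF cut0])
      show "0 \<le> edge_variation G (indicator B) * W B" if "B \<in> vertex_cuts G" for B
        using cut(1)[OF that] edge_variation_nonneg_closed[OF assms(1)] unfolding W_def by simp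
      fix \<kappa> assume "0 \<le> \<kappa>" and \<kappa>: "\<And>B. B \<in> vertex_cuts G \<Longrightarrow> \<kappa> \<le> edge_variation G (indicator B) * W B"
      have "\<exists>b. \<kappa> * N (\<lambda>v. indicator B v - b) \<le> edge_variation G (indicator B)"
        if "B \<subset> verts G" "B \<noteq> {}" for B
      proof -
        have B: "B \<in> vertex_cuts G" using that unfolding vertex_cuts_def by simp
        obtain b where "N (\<lambda>v. indicator B v - b) = 1 / W B" using cut(2)[OF B] unfolding W_def ..
        moreover have "\<kappa> / W B \<le> edge_variation G (indicator B)"
          using \<kappa>[OF B] cut(1)[OF B] unfolding W_def by (simp add: divide_le_eq)
        ultimately show ?thesis by (intro exI[of _ b]) simp
      qed
      then obtain a where "\<kappa> * N (\<lambda>v. \<phi> v - a) \<le> edge_variation G \<phi>"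
        using shifted_bound_from_cuts[OF \<open>0 \<le> \<kappa>\<close>] by blast
      moreover have "\<kappa> * D \<phi> \<le> \<kappa> * N (\<lambda>v. \<phi> v - a)"
        unfolding D_def N_def by (rule mult_left_mono[OF lq_dist_const_le[OF finite_verts] \<open>0 \<le> \<kappa>\<close>])
      ultimately show "\<kappa> \<le> edge_variation G \<phi> / D \<phi>" using \<open>0 < D \<phi>\<close> by (simp add: le_divide_eq)
    qed
  qed
  show "(INF \<phi>\<in>{\<phi>. 0 < D \<phi>}. ereal (edge_variation G \<phi> / D \<phi>)) \<le>
      (INF B\<in>vertex_cuts G. ereal (edge_variation G (indicator B) * W B))"
  proof (rule INF_greatest)
    fix B assume "B \<in> vertex_cuts G"
    then show "(INF \<phi>\<in>{\<phi>. 0 < D \<phi>}. ereal (edge_variation G \<phi> / D \<phi>)) \<le> ereal (edge_variation G (indicator B) * W B)"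
      using cut(1,3)[of B] unfolding W_def by (intro INF_lower2[where i = "indicator B"]) auto
  qed
qed

lemma lq_norm_indicator_dual:
  assumes "closed_graph G" and "1 \<le> \<nu>" and "B \<subseteq> verts G" and "B \<noteq> {}"
  shows "lq_norm (verts G) (vmeas G) (dual_exp \<nu>) (indicator B) = sum (vmeas G) B powr (1 - inv_exp \<nu>)"
  using assms lq_norm_indicator[OF _ _ one_le_dual_exp[OF assms(2)] assms(3,4)] inv_exp_dual_exp[OF assms(2)]
  unfolding closed_graph_def by simp

lemma small_set_is_vertex_cut:
  assumes "closed_graph G" and "B \<subseteq> verts G" and "B \<noteq> {}"
    and "sum (vmeas G) B \<le> sum (vmeas G) (verts G) / 2"
  shows "B \<in> vertex_cuts G" and "sum (vmeas G) B \<le> sum (vmeas G) (verts G - B)"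
proof -
  have "finite (verts G)" using assms(1) unfolding closed_graph_def by simp
  then have total: "sum (vmeas G) (verts G) = sum (vmeas G) B + sum (vmeas G) (verts G - B)"
    using assms(2) by (simp add: sum.subset_diff[of B] add.commute)
  then show "sum (vmeas G) B \<le> sum (vmeas G) (verts G - B)" using assms(4) by simp
  moreover have "0 < sum (vmeas G) B" using sum_pos_on_cut[OF assms(1-3)] .
  ultimately have "verts G - B \<noteq> {}" by (metis sum.empty not_le)
  then show "B \<in> vertex_cuts G" using assms(2,3) unfolding vertex_cuts_def by auto
qed

theorem INF_vertex_cuts_eq_INF_split_quotients:
  assumes "closed_graph G" and "1 \<le> \<nu>"
  defines "N \<equiv> lq_norm (verts G) (vmeas G) (dual_exp \<nu>)" and "m \<equiv> sum (vmeas G)"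
  shows "(INF B\<in>vertex_cuts G. ereal (edge_variation G (indicator B) * min (m B) (m (verts G - B)) powr (inv_exp \<nu> - 1))) =
    (INF \<phi>\<in>{\<phi>. split_on (verts G) (vmeas G) \<phi> \<and> 0 < N \<phi>}. ereal (edge_variation G \<phi> / N \<phi>))"
proof (rule antisym)
  interpret graph_seminorm G N
    unfolding N_def using assms(1) one_le_dual_exp[OF assms(2)] by (rule graph_seminorm_lq_norm)
  have vmeas: "\<And>v. v \<in> verts G \<Longrightarrow> 0 \<le> vmeas G v" using assms(1) unfolding closed_graph_def by (simp add: less_imp_le)
  have N_indicator: "N (indicator B) = m B powr (1 - inv_exp \<nu>)" if "B \<subseteq> verts G" "B \<noteq> {}" for B
    unfolding N_def m_def using lq_norm_indicator_dual[OF assms(1,2) that] .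
  define P where "P B \<longleftrightarrow> B \<subseteq> verts G \<and> m B \<le> m (verts G) / 2" for B
  have small: "B \<in> vertex_cuts G" "m B \<le> m (verts G - B)" if "B \<subseteq> verts G" "B \<noteq> {}" "P B" for B
    using small_set_is_vertex_cut[OF assms(1) that(1,2)] that(3) unfolding P_def m_def by auto
  show "(INF B\<in>vertex_cuts G. ereal (edge_variation G (indicator B) * min (m B) (m (verts G - B)) powr (inv_exp \<nu> - 1))) \<le>
    (INF \<phi>\<in>{\<phi>. split_on (verts G) (vmeas G) \<phi> \<and> 0 < N \<phi>}. ereal (edge_variation G \<phi> / N \<phi>))"
  proof (rule INF_greatest)
    fix \<phi> assume "\<phi> \<in> {\<phi>. split_on (verts G) (vmeas G) \<phi> \<and> 0 < N \<phi>}"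
    then have P: "P {v \<in> verts G. 0 < \<phi> v}" "P {v \<in> verts G. \<phi> v < 0}" and "0 < N \<phi>"
      unfolding split_on_def P_def m_def by auto
    have "\<not> (\<forall>v\<in>verts G. \<phi> v = 0)"
    proof
      assume "\<forall>v\<in>verts G. \<phi> v = 0"
      then have "N \<phi> = 0" unfolding N_def by (intro lq_norm_eq_0[OF finite_verts one_le_dual_exp[OF assms(2)]]) auto
      then show False using \<open>0 < N \<phi>\<close> by simp
    qed
    then obtain v0 where "v0 \<in> verts G" "\<phi> v0 \<noteq> 0" by blast
    obtain B0 where "B0 \<subseteq> verts G" "B0 \<noteq> {}" "P B0"
    proof (cases "0 < \<phi> v0")
      case True
      then show ?thesis using that[OF _ _ P(1)] \<open>v0 \<in> verts G\<close> by blast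
    next
      case False
      then show ?thesis using that[OF _ _ P(2)] \<open>v0 \<in> verts G\<close> \<open>\<phi> v0 \<noteq> 0\<close> by force
    qed
    show "(INF B\<in>vertex_cuts G. ereal (edge_variation G (indicator B) * min (m B) (m (verts G - B)) powr (inv_exp \<nu> - 1)))
        \<le> ereal (edge_variation G \<phi> / N \<phi>)"
    proof (rule INF_ereal_le_by_real_bound[OF small(1)[OF \<open>B0 \<subseteq> verts G\<close> \<open>B0 \<noteq> {}\<close> \<open>P B0\<close>]])
      show "0 \<le> edge_variation G (indicator B) * min (m B) (m (verts G - B)) powr (inv_exp \<nu> - 1)" for B
        using edge_variation_nonneg_closed[OF assms(1)] by simp
      fix \<kappa> assume "0 \<le> \<kappa>"
        and \<kappa>: "\<And>B. B \<in> vertex_cuts G \<Longrightarrow> \<kappa> \<le> edge_variation G (indicator B) * min (m B) (m (verts G - B)) powr (inv_exp \<nu> - 1)"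
      have "\<kappa> * N (indicator B) \<le> edge_variation G (indicator B)" if "B \<subseteq> verts G" "B \<noteq> {}" "P B" for B
      proof -
        have "0 < m B" unfolding m_def using sum_pos_on_cut[OF assms(1) that(1,2)] .
        have "\<kappa> \<le> edge_variation G (indicator B) * m B powr (inv_exp \<nu> - 1)"
          using \<kappa>[OF small(1)[OF that]] small(2)[OF that] by (simp add: min_absorb1)
        then have "\<kappa> * m B powr (1 - inv_exp \<nu>) \<le> edge_variation G (indicator B) * (m B powr (inv_exp \<nu> - 1) * m B powr (1 - inv_exp \<nu>))"
          by (metis mult.assoc mult_right_mono powr_ge_zero)
        also have "\<dots> = edge_variation G (indicator B)" using \<open>0 < m B\<close> by (simp flip: powr_add)
        finally show ?thesis using N_indicator[OF that(1,2)] by simp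
      qed
      moreover have "P A" if "A \<subseteq> B" "P B" for A B
      proof -
        have "m A \<le> m B"
          unfolding m_def using that finite_verts vmeas unfolding P_def by (intro sum_mono2) (auto intro: finite_subset)
        then show ?thesis using that unfolding P_def by auto
      qed
      ultimately have "\<kappa> * N \<phi> \<le> edge_variation G \<phi>"
        using bound_from_cuts_split[OF \<open>0 \<le> \<kappa>\<close> _ _ P] by blast
      then show "\<kappa> \<le> edge_variation G \<phi> / N \<phi>" using \<open>0 < N \<phi>\<close> by (simp add: le_divide_eq)
    qed
  qed
  show "(INF \<phi>\<in>{\<phi>. split_on (verts G) (vmeas G) \<phi> \<and> 0 < N \<phi>}. ereal (edge_variation G \<phi> / N \<phi>)) \<le>
    (INF B\<in>vertex_cuts G. ereal (edge_variation G (indicator B) * min (m B) (m (verts G - B)) powr (inv_exp \<nu> - 1)))"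
  proof (rule INF_greatest)
    fix B assume "B \<in> vertex_cuts G"
    then have B: "B \<subseteq> verts G" "B \<noteq> {}" "verts G - B \<noteq> {}" unfolding vertex_cuts_def by auto
    define B' where "B' = (if m B \<le> m (verts G - B) then B else verts G - B)"
    have B': "B' \<subseteq> verts G" "B' \<noteq> {}" "m B' = min (m B) (m (verts G - B))"
      using B unfolding B'_def by (auto simp: Diff_Diff_Int Int_absorb1)
    have "0 < m B'" unfolding m_def using sum_pos_on_cut[OF assms(1) B'(1,2)] .
    have "m (verts G) = m B + m (verts G - B)"
      unfolding m_def using B(1) finite_verts by (simp add: sum.subset_diff[of B] add.commute)
    moreover have "2 * min (m B) (m (verts G - B)) \<le> m B + m (verts G - B)" by (simp add: min_def)
    moreover have sets: "{v \<in> verts G. (0::real) < indicator B' v} = B'" "{v \<in> verts G. indicator B' v < (0::real)} = {}"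
      using B'(1) by (auto simp: indicator_def)
    ultimately have "split_on (verts G) (vmeas G) (indicator B')"
      using B'(3) \<open>0 < m B'\<close> unfolding split_on_def m_def[symmetric] sets by (simp add: m_def)
    moreover have "edge_variation G (indicator B') = edge_variation G (indicator B)"
      unfolding B'_def using edge_variation_indicator_complement[OF assms(1)] by simp
    moreover have "N (indicator B') = min (m B) (m (verts G - B)) powr (1 - inv_exp \<nu>)"
      using N_indicator[OF B'(1,2)] B'(3) by simp
    moreover have "min (m B) (m (verts G - B)) powr (inv_exp \<nu> - 1) = 1 / min (m B) (m (verts G - B)) powr (1 - inv_exp \<nu>)"
      by (simp flip: powr_minus_divide)
    ultimately show "(INF \<phi>\<in>{\<phi>. split_on (verts G) (vmeas G) \<phi> \<and> 0 < N \<phi>}. ereal (edge_variation G \<phi> / N \<phi>)) \<le>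
        ereal (edge_variation G (indicator B) * min (m B) (m (verts G - B)) powr (inv_exp \<nu> - 1))"
      using \<open>0 < m B'\<close> B'(3) by (intro INF_lower2[where i = "indicator B'"]) auto
  qed
qed

lemma ereal_mult_INF:
  assumes "0 < k"
  shows "ereal k * (INF x\<in>A. ereal (f x)) = (INF x\<in>A. ereal (k * f x))"
proof -
  have "ereal k * (INF x\<in>A. ereal (f x)) = Inf {ereal k * y |y. y \<in> (\<lambda>x. ereal (f x)) ` A}"
    using ereal_Inf_cmult[OF assms, of "\<lambda>y. y \<in> (\<lambda>x. ereal (f x)) ` A"] by simp
  also have "{ereal k * y |y. y \<in> (\<lambda>x. ereal (f x)) ` A} = (\<lambda>x. ereal (k * f x)) ` A"
    unfolding setcompr_eq_image by (simp add: image_comp o_def)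
  finally show ?thesis .
qed

lemma Itilde_Itilde'_comparison:
  assumes "closed_graph G" and "1 \<le> \<nu>"
  shows "Itilde G \<nu> \<le> Itilde' G \<nu>" and "Itilde' G \<nu> \<le> ereal (2 powr inv_exp \<nu>) * Itilde G \<nu>"
proof -
  define x y where "x B = sum (vmeas G) B" and "y B = sum (vmeas G) (verts G - B)" for B
  have bounds: "edge_variation G (indicator B) * min (x B) (y B) powr (inv_exp \<nu> - 1) \<le>
        edge_variation G (indicator B) * Itilde'_weight \<nu> (x B) (y B)"
      "edge_variation G (indicator B) * Itilde'_weight \<nu> (x B) (y B) \<le>
        2 powr inv_exp \<nu> * (edge_variation G (indicator B) * min (x B) (y B) powr (inv_exp \<nu> - 1))"
    if "B \<in> vertex_cuts G" for B
  proof -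
    have "0 < x B" "0 < y B" using that sum_pos_on_cut[OF assms(1)] unfolding vertex_cuts_def x_def y_def by auto
    note w = Itilde'_weight_bounds[OF assms(2) this]
    show "edge_variation G (indicator B) * min (x B) (y B) powr (inv_exp \<nu> - 1) \<le>
        edge_variation G (indicator B) * Itilde'_weight \<nu> (x B) (y B)"
      using w(1) edge_variation_nonneg_closed[OF assms(1)] by (rule mult_left_mono)
    show "edge_variation G (indicator B) * Itilde'_weight \<nu> (x B) (y B) \<le>
        2 powr inv_exp \<nu> * (edge_variation G (indicator B) * min (x B) (y B) powr (inv_exp \<nu> - 1))"
      using mult_left_mono[OF w(2) edge_variation_nonneg_closed[OF assms(1)]] by (simp add: mult.left_commute)
  qed
  show "Itilde G \<nu> \<le> Itilde' G \<nu>"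
    unfolding Itilde_eq_INF_vertex_cuts[OF assms(1)] Itilde'_eq_INF_vertex_cuts[OF assms]
    using bounds(1) unfolding x_def y_def by (intro INF_mono) auto
  have two: "0 < (2::real) powr inv_exp \<nu>" by simp
  show "Itilde' G \<nu> \<le> ereal (2 powr inv_exp \<nu>) * Itilde G \<nu>"
    unfolding Itilde_eq_INF_vertex_cuts[OF assms(1)] Itilde'_eq_INF_vertex_cuts[OF assms] ereal_mult_INF[OF two]
    using bounds(2) unfolding x_def y_def by (intro INF_mono) auto
qed

theorem mainTheorem4:
  fixes G :: "('v, 'e) mgraph" and \<nu> :: ereal
  assumes "closed_graph G" and "1 \<le> \<nu>"
  shows "Itilde' G \<nu> = Stilde G \<nu> \<and> Itilde G \<nu> = Stilde_split G \<nu> \<and>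
         Itilde G \<nu> \<le> Itilde' G \<nu> \<and> Itilde' G \<nu> \<le> ereal (2 powr inv_exp \<nu>) * Itilde G \<nu>"
proof (intro conjI Itilde_Itilde'_comparison[OF assms])
  show "Itilde' G \<nu> = Stilde G \<nu>"
    using Itilde'_eq_INF_vertex_cuts[OF assms] INF_vertex_cuts_eq_INF_shifted_quotients[OF assms]
      Stilde_eq_INF_vertex_functions[OF assms(1)] by simp
  show "Itilde G \<nu> = Stilde_split G \<nu>"
    using Itilde_eq_INF_vertex_cuts[OF assms(1)] INF_vertex_cuts_eq_INF_split_quotients[OF assms]
      Stilde_split_eq_INF_vertex_functions[OF assms(1)] by simp
qed

end
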